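(* Let $w\geqslant 2$ and $h\geqslant1$ be integers, $\underline h=2^{\lfloor\log_2 h\rfloor}$, $\overline h=2^{\lceil\log_2 h\rceil}$, and let $\mathcal{H}_{h,w}$ be the set of fast Hough transform patterns on the $h\times w$ image. Then for $L\in\{\mathrm{OR},\mathrm{SUM}\}$, $$\log_3 8\; w\,\underline h\log_2\underline h\;\leqslant\; L(\mathcal{H}_{h,w})\;\leqslant\; 2\,w\,\overline h\log_2\overline h,$$ and $$\log_9 8\; w\,\underline h\log_2\underline h\;\leqslant\; L2(\mathcal{H}_{h,w})\;\leqslant\; w\,\overline h\log_2\overline h,$$ where $L2$ denotes $\mathrm{OR2}$ if $L=\mathrm{OR}$ and $\mathrm{SUM2}$ if $L=\mathrm{SUM}$.
   Context: Image: for integers $h\geqslant1$ (height) and $w\geqslant2$ (width), an image is the set $I$ of $wh$ pixel variables $p_{ij}$, $i=0,\dots,h-1$ (row index, counted from the bottom), $j=0,\dots,w-1$ (column index). A pattern is a nonempty subset of $I$; a pattern set $\mathcal{T}=\{T_k\}_{k=1}^m$ is a nonempty set of $m$ distinct patterns. Computing $\mathcal{T}$ means computing simultaneously $y_k=\sum_{p\in T_k}p$, $k=1,\dots,m$, where the "sum" is a commutative semigroup operation on pixel values. Circuits: a circuit is a directed acyclic graph with $wh$ input nodes $p_{ij}$ of fanin zero and $m$ output nodes $y_k$ of fanout zero; every node of nonzero fanin (a gate) may have any positive number of incoming edges and computes the semigroup sum of the values of its in-neighbours. The size of a circuit is its number of edges. A circuit computes $\mathcal{T}$ if, for every assignment of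 values to the inputs, output $y_k$ equals $\sum_{p\in T_k}p$ for all $k$. $\mathrm{OR}(\mathcal{T})$ (resp. $\mathrm{SUM}(\mathcal{T})$) is the minimal size of a circuit computing $\mathcal{T}$ over the semigroup $(\{0,1\},\vee)$ (resp. $(\mathbb{N},+)$ with $\mathbb{N}=\{0,1,2,\dots\}$). $\mathrm{OR2}(\mathcal{T})$ (resp. $\mathrm{SUM2}(\mathcal{T})$) is the minimal number of gates among circuits computing $\mathcal{T}$ over $(\{0,1\},\vee)$ (resp. $(\mathbb{N},+)$) in which every node has fanin at most $2$. FHT patterns: for a pattern $T$ containing exactly one pixel in each of its rows, let $\Delta(T)=(j_{top}-j_{bot})\bmod w$, where $j_{top},j_{bot}$ are the column indices of the topmost and bottommost pixels of $T$, and let $\mathit{tran}_{a,b}(T)=\{p_{i+a,\,(j+b)\bmod w}\mid p_{ij}\in T\}$. For $h=2^d$ define $\mathcal{H}_0=\{\{p_{00}\},\{p_{01}\},\dots,\{p_{0,w-1}\}\}$ and, for $k=1,\dots,d$, $\mathcal{H}_k=\{T\cup\mathit{tran}_{2^{k-1},\,\Delta(T)+s}(T)\mid T\in\mathcal{H}_{k-1},\ s\in\{0,1\}\}$; set $\mathcal{H}_{h,w}=\mathcal{H}_d$. For arbitrary $h\geqslant1$, view the $h\times w$ image $I$ as the bottom $h$ rows of the $\overline h\times w$ image and set $\mathcal{H}_{h,w}=\{T\cap I\mid T\in\mathcal{H}_{\overline h,w}\}$. *)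

theory Defs
  imports Complex_Main
begin

type_synonym pixel = "nat \<times> nat"   (* (row i, column j), rows counted from the bottom *)

definition img :: "nat \<Rightarrow> nat \<Rightarrow> pixel set" where
  "img h w = {(i, j). i < h \<and> j < w}"

definition col_at :: "pixel set \<Rightarrow> nat \<Rightarrow> nat" where
  "col_at T i = (THE j. (i, j) \<in> T)"

definition Delta :: "nat \<Rightarrow> pixel set \<Rightarrow> nat" where
  "Delta w T = nat ((int (col_at T (Max (fst ` T))) - int (col_at T (Min (fst ` T)))) mod int w)"

definition tran :: "nat \<Rightarrow> nat \<Rightarrow> nat \<Rightarrow> pixel set \<Rightarrow> pixel set" where
  "tran w a b T = (\<lambda>(i, j). (i + a, (j + b) mod w)) ` T"

fun FHT_level :: "nat \<Rightarrow> nat \<Rightarrow> pixel set set" where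
  "FHT_level w 0 = {{(0, j)} | j. j < w}"
| "FHT_level w (Suc k) =
     {T \<union> tran w (2 ^ k) (Delta w T + s) T | T s. T \<in> FHT_level w k \<and> s \<in> {0, 1}}"

definition h_up :: "nat \<Rightarrow> nat" where
  "h_up h = 2 ^ nat \<lceil>log 2 (real h)\<rceil>"

definition h_low :: "nat \<Rightarrow> nat" where
  "h_low h = 2 ^ nat \<lfloor>log 2 (real h)\<rfloor>"

(* H_{h,w}: FHT patterns of the h_up x w image, restricted to the bottom h rows *)
definition FHT :: "nat \<Rightarrow> nat \<Rightarrow> pixel set set" where
  "FHT h w = {T \<inter> img h w | T. T \<in> FHT_level w (nat \<lceil>log 2 (real h)\<rceil>)}"

(* Circuits: node set V (nodes are naturals), edge set E, input node of each pixel,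
   output node of each pattern. *)
definition preds :: "(nat \<times> nat) set \<Rightarrow> nat \<Rightarrow> nat set" where
  "preds E v = {u. (u, v) \<in> E}"

definition is_circuit ::
  "pixel set \<Rightarrow> pixel set set \<Rightarrow> nat set \<Rightarrow> (nat \<times> nat) set \<Rightarrow> (pixel \<Rightarrow> nat) \<Rightarrow> (pixel set \<Rightarrow> nat) \<Rightarrow> bool" where
  "is_circuit I \<T> V E inp out \<longleftrightarrow>
     finite V \<and> E \<subseteq> V \<times> V \<and> (\<forall>v. (v, v) \<notin> E\<^sup>+) \<and>
     inj_on inp I \<and> inp ` I \<subseteq> V \<and> (\<forall>p\<in>I. preds E (inp p) = {}) \<and>
     (\<forall>v\<in>V. preds E v = {} \<longrightarrow> v \<in> inp ` I) \<and>
     inj_on out \<T> \<and> out ` \<T> \<subseteq> V \<and> (\<forall>T\<in>\<T>. \<forall>u. (out T, u) \<notin> E)"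

definition computes_SUM ::
  "pixel set \<Rightarrow> pixel set set \<Rightarrow> nat set \<Rightarrow> (nat \<times> nat) set \<Rightarrow> (pixel \<Rightarrow> nat) \<Rightarrow> (pixel set \<Rightarrow> nat) \<Rightarrow> bool" where
  "computes_SUM I \<T> V E inp out \<longleftrightarrow>
     (\<forall>x :: pixel \<Rightarrow> nat. \<exists>val :: nat \<Rightarrow> nat.
        (\<forall>p\<in>I. val (inp p) = x p) \<and>
        (\<forall>v\<in>V. preds E v \<noteq> {} \<longrightarrow> val v = (\<Sum>u\<in>preds E v. val u)) \<and>
        (\<forall>T\<in>\<T>. val (out T) = (\<Sum>p\<in>T. x p)))"

definition computes_OR ::
  "pixel set \<Rightarrow> pixel set set \<Rightarrow> nat set \<Rightarrow> (nat \<times> nat) set \<Rightarrow> (pixel \<Rightarrow> nat) \<Rightarrow> (pixel set \<Rightarrow> nat) \<Rightarrow> bool" where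
  "computes_OR I \<T> V E inp out \<longleftrightarrow>
     (\<forall>x :: pixel \<Rightarrow> bool. \<exists>val :: nat \<Rightarrow> bool.
        (\<forall>p\<in>I. val (inp p) = x p) \<and>
        (\<forall>v\<in>V. preds E v \<noteq> {} \<longrightarrow> val v = (\<exists>u\<in>preds E v. val u)) \<and>
        (\<forall>T\<in>\<T>. val (out T) = (\<exists>p\<in>T. x p)))"

definition gates :: "nat set \<Rightarrow> (nat \<times> nat) set \<Rightarrow> nat set" where
  "gates V E = {v\<in>V. preds E v \<noteq> {}}"

definition fanin2 :: "(nat \<times> nat) set \<Rightarrow> bool" where
  "fanin2 E \<longleftrightarrow> (\<forall>v. card (preds E v) \<le> 2)"

definition OR_cx :: "pixel set \<Rightarrow> pixel set set \<Rightarrow> nat" where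
  "OR_cx I \<T> = (LEAST n. \<exists>V E inp out. is_circuit I \<T> V E inp out \<and> computes_OR I \<T> V E inp out \<and> card E = n)"

definition SUM_cx :: "pixel set \<Rightarrow> pixel set set \<Rightarrow> nat" where
  "SUM_cx I \<T> = (LEAST n. \<exists>V E inp out. is_circuit I \<T> V E inp out \<and> computes_SUM I \<T> V E inp out \<and> card E = n)"

definition OR2_cx :: "pixel set \<Rightarrow> pixel set set \<Rightarrow> nat" where
  "OR2_cx I \<T> = (LEAST n. \<exists>V E inp out. is_circuit I \<T> V E inp out \<and> fanin2 E \<and> computes_OR I \<T> V E inp out \<and> card (gates V E) = n)"

definition SUM2_cx :: "pixel set \<Rightarrow> pixel set set \<Rightarrow> nat" where
  "SUM2_cx I \<T> = (LEAST n. \<exists>V E inp out. is_circuit I \<T> V E inp out \<and> fanin2 E \<and> computes_SUM I \<T> V E inp out \<and> card (gates V E) = n)"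

end

(*
  Upper bound: by the FHT recursion a pattern of level k + 1 is the disjoint union of a
  pattern of level k and a rotated copy of one, moved up by 2^k rows. Hence the clipped,
  vertically translated patterns of all levels form a family in which every member with
  at least two pixels splits into two disjoint members, and one fan-in-2 gate per such
  member computes all patterns. There are at most w * 2^d of them on each of the d levels
  above the pixels, and a fan-in-2 circuit has at most twice as many edges as gates.

  Lower bound: let 2^l = h_low h. On the bottom 2^l rows the patterns are exactly the
  level-l patterns, and by induction over the levels a nonempty set S of pixels lies in
  at most 2^l / |S| of them. Weight an input p below an output T by the total fan-in c of
  the nodes between them. A Kraft-type inequality, sum over p of 3^(-c/3) <= 1, and Gibbs'
  inequality give every output a weight of at least 3 * 2^l * log3 (2^l) on the bottom rows.
  Charging the weights to the edges, a node with inputs S lies below at most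
  2^l / |S \<inter> bottom| of the w * 2^l chosen outputs, so
  |E| >= 3 * w * 2^l * l * log3 2 = log3 8 * w * 2^l * l.
  Fan-in two halves the bound for the number of gates.
*)

theory Submission
  imports Defs
begin

section \<open>Patterns with one pixel in each row\<close>

definition one_per_row :: "nat \<Rightarrow> nat \<Rightarrow> pixel set \<Rightarrow> bool" where
  "one_per_row n w P \<longleftrightarrow> P \<subseteq> {..<n} \<times> {..<w} \<and> (\<forall>i<n. \<exists>!j. (i, j) \<in> P)"

lemma one_per_row_col:
  assumes "one_per_row n w P" "i < n"
  shows "(i, col_at P i) \<in> P" "col_at P i < w"
proof -
  from assms obtain j where "(i, j) \<in> P" "\<forall>j'. (i, j') \<in> P \<longrightarrow> j' = j"
    unfolding one_per_row_def by blast
  then have "col_at P i = j" unfolding col_at_def by blast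
  then show "(i, col_at P i) \<in> P" using \<open>(i, j) \<in> P\<close> by simp
  then show "col_at P i < w" using assms unfolding one_per_row_def by blast
qed

lemma one_per_row_memD:
  assumes "one_per_row n w P" "(i, j) \<in> P"
  shows "i < n" "j < w" "col_at P i = j"
proof -
  show "i < n" "j < w" using assms unfolding one_per_row_def by auto
  then show "col_at P i = j"
    using assms one_per_row_col[OF assms(1), of i] unfolding one_per_row_def by blast
qed

lemma one_per_row_eq_image: "one_per_row n w P \<Longrightarrow> P = (\<lambda>i. (i, col_at P i)) ` {..<n}"
  by (auto simp: image_iff dest: one_per_row_memD one_per_row_col)

lemma one_per_row_card: "one_per_row n w P \<Longrightarrow> card P = n"
  by (subst one_per_row_eq_image) (auto simp: card_image inj_on_def)

lemma one_per_row_finite: "one_per_row n w P \<Longrightarrow> finite P"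
  by (subst one_per_row_eq_image) auto

lemma one_per_row_subset: "one_per_row n w P \<Longrightarrow> P \<subseteq> UNIV \<times> {..<w}"
  unfolding one_per_row_def by auto

lemma one_per_row_fst_less: "one_per_row n w P \<Longrightarrow> p \<in> P \<Longrightarrow> fst p < n"
  by (cases p) (auto dest: one_per_row_memD(1))

lemma Delta_one_per_row:
  assumes "one_per_row n w P" "n \<ge> 1"
  shows "Delta w P = nat ((int (col_at P (n - 1)) - int (col_at P 0)) mod int w)"
proof -
  have "fst ` P = {..<n}" by (subst one_per_row_eq_image[OF assms(1)]) (auto simp: image_image)
  moreover have "Max {..<n} = n - 1" "Min {..<n} = (0::nat)" using assms(2)
    by (auto intro: Max_eqI Min_eqI)
  ultimately show ?thesis unfolding Delta_def by simp
qed

lemma mem_tran_iff: "(i, j) \<in> tran w a b P \<longleftrightarrow> a \<le> i \<and> (\<exists>j'. (i - a, j') \<in> P \<and> j = (j' + b) mod w)"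
  unfolding tran_def by (force simp: image_iff)

lemma tran_Un: "tran w a b (A \<union> B) = tran w a b A \<union> tran w a b B"
  unfolding tran_def by (rule image_Un)

lemma tran_tran: "tran w a b (tran w a' b' P) = tran w (a + a') (b + b') P"
  unfolding tran_def image_comp by (rule image_cong) (auto simp: mod_add_right_eq add_ac)

lemma tran_0_0: "P \<subseteq> UNIV \<times> {..<w} \<Longrightarrow> tran w 0 0 P = P"
  unfolding tran_def by (force simp: image_iff)

lemma add_mod_cancel_right:
  fixes j j' c w :: nat
  assumes "(j + c) mod w = (j' + c) mod w" "j < w" "j' < w"
  shows "j = j'"
proof -
  have "int w dvd (int j + int c) - (int j' + int c)"
    using assms(1) by (metis mod_eq_dvd_iff of_nat_add zmod_int)
  then have "int w dvd int j - int j'" by simp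
  then show ?thesis using assms(2,3) dvd_imp_le_int[of "int j - int j'" "int w"] by fastforce
qed

lemma add_mod_bit_cancel:
  fixes a s s' w :: nat
  assumes "(a + s) mod w = (a + s') mod w" "s \<in> {0, 1}" "s' \<in> {0, 1}" "w \<ge> 2"
  shows "s = s'"
  using assms by (auto simp: mod_Suc split: if_splits)

lemma one_per_row_rotate:
  assumes "one_per_row n w P" "w > 0"
  shows "one_per_row n w (tran w 0 c P)"
    and "i < n \<Longrightarrow> col_at (tran w 0 c P) i = (col_at P i + c) mod w"
proof -
  show rot: "one_per_row n w (tran w 0 c P)"
    unfolding one_per_row_def
  proof (intro conjI allI impI subsetI)
    fix x assume "x \<in> tran w 0 c P"
    then show "x \<in> {..<n} \<times> {..<w}"
      using assms by (auto simp: tran_def dest: one_per_row_memD)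
  next
    fix i assume "i < n"
    show "\<exists>!j. (i, j) \<in> tran w 0 c P"
    proof (rule ex1I)
      show "(i, (col_at P i + c) mod w) \<in> tran w 0 c P"
        using one_per_row_col[OF assms(1) \<open>i < n\<close>] by (auto simp: mem_tran_iff)
    qed (auto simp: mem_tran_iff dest: one_per_row_memD(3)[OF assms(1)])
  qed
  assume "i < n"
  then have "(i, (col_at P i + c) mod w) \<in> tran w 0 c P"
    using one_per_row_col[OF assms(1)] by (auto simp: mem_tran_iff)
  then show "col_at (tran w 0 c P) i = (col_at P i + c) mod w"
    using one_per_row_memD(3)[OF rot] by blast
qed

lemma Delta_rotate:
  assumes "one_per_row n w P" "w > 0" "n \<ge> 1"
  shows "Delta w (tran w 0 c P) = Delta w P"
proof -
  have "n - 1 < n" "0 < n" using assms by auto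
  then have "Delta w (tran w 0 c P)
      = nat ((int ((col_at P (n - 1) + c) mod w) - int ((col_at P 0 + c) mod w)) mod int w)"
    using Delta_one_per_row[OF one_per_row_rotate(1)[OF assms(1,2)] assms(3)]
      one_per_row_rotate(2)[OF assms(1,2)] by simp
  also have "\<dots> = nat ((int (col_at P (n - 1)) - int (col_at P 0)) mod int w)"
    by (simp add: zmod_int mod_diff_eq)
  also have "\<dots> = Delta w P" using Delta_one_per_row[OF assms(1,3)] by simp
  finally show ?thesis .
qed

lemma rotate_inj:
  assumes "one_per_row n w P" "one_per_row n w P'" "w > 0" "tran w 0 c P = tran w 0 c P'"
  shows "P = P'"
proof -
  have "col_at P i = col_at P' i" if "i < n" for i
    using one_per_row_rotate(2)[OF assms(1,3) that, of c] one_per_row_rotate(2)[OF assms(2,3) that, of c]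
      one_per_row_col(2)[OF assms(1) that] one_per_row_col(2)[OF assms(2) that]
      add_mod_cancel_right assms(4) by metis
  then show ?thesis
    using one_per_row_eq_image[OF assms(1)] one_per_row_eq_image[OF assms(2)] by (auto simp: image_iff)
qed

section \<open>The levels of the fast Hough transform\<close>

definition fht_upper :: "nat \<Rightarrow> pixel set \<Rightarrow> nat \<Rightarrow> pixel set" where
  "fht_upper w Q s = tran w 0 (Delta w Q + s) Q"

definition fht_step :: "nat \<Rightarrow> nat \<Rightarrow> pixel set \<Rightarrow> nat \<Rightarrow> pixel set" where
  "fht_step w k Q s = Q \<union> tran w (2 ^ k) 0 (fht_upper w Q s)"

definition rows_below :: "nat \<Rightarrow> pixel set \<Rightarrow> pixel set" where
  "rows_below n S = {p \<in> S. fst p < n}"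

definition rows_from :: "nat \<Rightarrow> pixel set \<Rightarrow> pixel set" where
  "rows_from n S = (\<lambda>(i, j). (i - n, j)) ` {p \<in> S. n \<le> fst p}"

lemma FHT_level_Suc_eq:
  "FHT_level w (Suc k) = (\<lambda>(Q, s). fht_step w k Q s) ` (FHT_level w k \<times> {0, 1})"
  by (auto simp: fht_step_def fht_upper_def tran_tran image_iff)

declare FHT_level.simps(2) [simp del]

lemma FHT_level_SucE:
  assumes "P \<in> FHT_level w (Suc k)"
  obtains Q s where "Q \<in> FHT_level w k" "s \<in> {0, 1}" "P = fht_step w k Q s"
  using assms unfolding FHT_level_Suc_eq by auto

lemma fht_step_in_FHT_level:
  "Q \<in> FHT_level w k \<Longrightarrow> s \<in> {0, 1} \<Longrightarrow> fht_step w k Q s \<in> FHT_level w (Suc k)"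
  unfolding FHT_level_Suc_eq by auto

lemma subset_iff_rows_split:
  "S \<subseteq> X \<longleftrightarrow> rows_below n S \<subseteq> rows_below n X \<and> rows_from n S \<subseteq> rows_from n X"
proof
  assume "S \<subseteq> X"
  then show "rows_below n S \<subseteq> rows_below n X \<and> rows_from n S \<subseteq> rows_from n X"
    unfolding rows_below_def rows_from_def by blast
next
  assume split: "rows_below n S \<subseteq> rows_below n X \<and> rows_from n S \<subseteq> rows_from n X"
  show "S \<subseteq> X"
  proof
    fix p assume "p \<in> S"
    obtain i j where p: "p = (i, j)" by (cases p)
    show "p \<in> X"
    proof (cases "i < n")
      case True
      then show ?thesis using split \<open>p \<in> S\<close> p unfolding rows_below_def by auto
    next
      case False
      then have "(i - n, j) \<in> rows_from n S"
        using \<open>p \<in> S\<close> p unfolding rows_from_def by (auto intro!: image_eqI[of _ _ p])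
      then obtain i' where "(i', j) \<in> X" "n \<le> i'" "i' - n = i - n"
        using split unfolding rows_from_def by auto
      then have "i' = i" using False by linarith
      then show ?thesis using \<open>(i', j) \<in> X\<close> p by simp
    qed
  qed
qed

lemma empty_iff_rows_split: "S = {} \<longleftrightarrow> rows_below n S = {} \<and> rows_from n S = {}"
  unfolding rows_below_def rows_from_def by force

lemma card_rows_split:
  assumes "finite S"
  shows "card S = card (rows_below n S) + card (rows_from n S)"
proof -
  have "inj_on (\<lambda>(i, j). (i - n, j)) {p \<in> S. n \<le> fst p}"
    by (rule inj_onI) auto
  then have "card (rows_from n S) = card {p \<in> S. n \<le> fst p}"
    unfolding rows_from_def by (rule card_image)
  moreover have "S = {p \<in> S. fst p < n} \<union> {p \<in> S. n \<le> fst p}" by auto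
  then have "card S = card {p \<in> S. fst p < n} + card {p \<in> S. n \<le> fst p}"
    using assms by (metis (no_types, lifting) card_Un_disjoint disjoint_iff finite_Un mem_Collect_eq not_less)
  ultimately show ?thesis unfolding rows_below_def by simp
qed

lemma rows_below_Un: "rows_below n (A \<union> B) = rows_below n A \<union> rows_below n B"
  unfolding rows_below_def by auto

lemma rows_from_Un: "rows_from n (A \<union> B) = rows_from n A \<union> rows_from n B"
proof -
  have "{p \<in> A \<union> B. n \<le> fst p} = {p \<in> A. n \<le> fst p} \<union> {p \<in> B. n \<le> fst p}" by blast
  then show ?thesis unfolding rows_from_def by (simp add: image_Un)
qed

lemma rows_below_one_per_row: "one_per_row n w P \<Longrightarrow> rows_below n P = P"
  unfolding rows_below_def using one_per_row_fst_less by blast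

lemma rows_from_one_per_row: "one_per_row n w P \<Longrightarrow> rows_from n P = {}"
  unfolding rows_from_def using one_per_row_fst_less by fastforce

lemma one_per_row_rows_below:
  assumes "one_per_row n w P" "m \<le> n"
  shows "one_per_row m w (rows_below m P)"
  unfolding one_per_row_def rows_below_def
proof (intro conjI allI impI)
  show "{p \<in> P. fst p < m} \<subseteq> {..<m} \<times> {..<w}" using assms(1) unfolding one_per_row_def by auto
  fix i assume "i < m"
  then show "\<exists>!j. (i, j) \<in> {p \<in> P. fst p < m}" using assms unfolding one_per_row_def by auto
qed

lemma Int_img_eq_rows_below: "P \<subseteq> UNIV \<times> {..<w} \<Longrightarrow> P \<inter> img m w = rows_below m P"
  unfolding img_def rows_below_def by auto

lemma rows_below_tran: "m \<le> a \<Longrightarrow> rows_below m (tran w a b P) = {}"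
  unfolding rows_below_def by (auto simp: tran_def)

lemma tran_0_eq_lift: "P \<subseteq> UNIV \<times> {..<w} \<Longrightarrow> tran w a 0 P = (\<lambda>(i, j). (i + a, j)) ` P"
  unfolding tran_def by (rule image_cong) auto

lemma rows_from_tran:
  assumes "P \<subseteq> UNIV \<times> {..<w}"
  shows "rows_from a (tran w a 0 P) = P"
proof -
  have "{p \<in> (\<lambda>(i, j). (i + a, j)) ` P. a \<le> fst p} = (\<lambda>(i, j). (i + a, j)) ` P" by auto
  then show ?thesis
    unfolding rows_from_def tran_0_eq_lift[OF assms] by (simp add: image_image case_prod_beta)
qed

lemma rows_below_fht_step: "m \<le> 2 ^ k \<Longrightarrow> rows_below m (fht_step w k Q s) = rows_below m Q"
  unfolding fht_step_def rows_below_Un by (simp add: rows_below_tran)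

lemma one_per_row_fht_upper:
  "one_per_row n w Q \<Longrightarrow> w > 0 \<Longrightarrow> one_per_row n w (fht_upper w Q s)"
  unfolding fht_upper_def by (rule one_per_row_rotate(1))

lemma rows_fht_step:
  assumes "one_per_row (2 ^ k) w Q" "w > 0"
  shows "rows_below (2 ^ k) (fht_step w k Q s) = Q"
    and "rows_from (2 ^ k) (fht_step w k Q s) = fht_upper w Q s"
proof -
  show "rows_below (2 ^ k) (fht_step w k Q s) = Q"
    using rows_below_fht_step[of "2 ^ k" k] rows_below_one_per_row[OF assms(1)] by simp
  have "rows_from (2 ^ k) (tran w (2 ^ k) 0 (fht_upper w Q s)) = fht_upper w Q s"
    using rows_from_tran one_per_row_subset[OF one_per_row_fht_upper[OF assms]] by blast
  then show "rows_from (2 ^ k) (fht_step w k Q s) = fht_upper w Q s"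
    using rows_from_one_per_row[OF assms(1)] unfolding fht_step_def rows_from_Un by simp
qed

lemma one_per_row_stack:
  assumes "one_per_row n w Q" "one_per_row n w R"
  shows "one_per_row (2 * n) w (Q \<union> tran w n 0 R)"
proof -
  have R: "tran w n 0 R = (\<lambda>(i, j). (i + n, j)) ` R"
    using tran_0_eq_lift one_per_row_subset[OF assms(2)] by blast
  show ?thesis
    unfolding one_per_row_def
  proof (intro conjI allI impI)
    show "Q \<union> tran w n 0 R \<subseteq> {..<2 * n} \<times> {..<w}"
      unfolding R using assms by (auto dest: one_per_row_memD)
  next
    fix i assume "i < 2 * n"
    show "\<exists>!j. (i, j) \<in> Q \<union> tran w n 0 R"
    proof (cases "i < n")
      case True
      show ?thesis
      proof (rule ex1I)
        show "(i, col_at Q i) \<in> Q \<union> tran w n 0 R" using one_per_row_col(1)[OF assms(1) True] by blast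
      next
        fix j assume "(i, j) \<in> Q \<union> tran w n 0 R"
        then have "(i, j) \<in> Q" using True unfolding R by auto
        then show "j = col_at Q i" using one_per_row_memD(3)[OF assms(1)] by simp
      qed
    next
      case False
      then have i: "i - n < n" "i = (i - n) + n" using \<open>i < 2 * n\<close> by auto
      show ?thesis
      proof (rule ex1I)
        show "(i, col_at R (i - n)) \<in> Q \<union> tran w n 0 R"
          unfolding R using one_per_row_col(1)[OF assms(2) i(1)] i(2)
          by (auto intro!: image_eqI[of _ _ "(i - n, col_at R (i - n))"])
      next
        fix j assume "(i, j) \<in> Q \<union> tran w n 0 R"
        then have "(i - n, j) \<in> R"
          using False one_per_row_fst_less[OF assms(1), of "(i, j)"] unfolding R by auto
        then show "j = col_at R (i - n)" using one_per_row_memD(3)[OF assms(2)] by simp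
      qed
    qed
  qed
qed

lemma one_per_row_FHT_level: "w > 0 \<Longrightarrow> P \<in> FHT_level w k \<Longrightarrow> one_per_row (2 ^ k) w P"
proof (induction k arbitrary: P)
  case 0
  then show ?case by (auto simp: one_per_row_def)
next
  case (Suc k)
  obtain Q s where Q: "Q \<in> FHT_level w k" "P = fht_step w k Q s"
    using Suc.prems(2) by (rule FHT_level_SucE)
  have "one_per_row (2 ^ k) w Q" using Suc.IH Suc.prems(1) Q(1) by blast
  then show ?case
    using one_per_row_stack one_per_row_fht_upper Suc.prems(1) Q(2) by (simp add: fht_step_def)
qed

lemma finite_FHT_level: "finite (FHT_level w k)"
  by (induction k) (simp_all add: FHT_level_Suc_eq)

lemma rotate_FHT_level: "w > 0 \<Longrightarrow> P \<in> FHT_level w k \<Longrightarrow> tran w 0 c P \<in> FHT_level w k"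
proof (induction k arbitrary: P)
  case 0
  then show ?case by (auto simp: tran_def)
next
  case (Suc k)
  obtain Q s where Q: "Q \<in> FHT_level w k" "s \<in> {0, 1}" "P = fht_step w k Q s"
    using Suc.prems(2) by (rule FHT_level_SucE)
  have "Delta w (tran w 0 c Q) = Delta w Q"
    using Delta_rotate[OF one_per_row_FHT_level[OF Suc.prems(1) Q(1)] Suc.prems(1)] by simp
  then have "tran w 0 c P = fht_step w k (tran w 0 c Q) s"
    unfolding Q(3) fht_step_def fht_upper_def tran_Un tran_tran by (simp add: add_ac)
  then show ?case using Suc.IH Suc.prems(1) Q(1,2) fht_step_in_FHT_level by metis
qed

lemma fht_upper_in_FHT_level: "w > 0 \<Longrightarrow> Q \<in> FHT_level w k \<Longrightarrow> fht_upper w Q s \<in> FHT_level w k"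
  unfolding fht_upper_def by (rule rotate_FHT_level)

lemma Delta_fht_upper:
  "one_per_row n w Q \<Longrightarrow> w > 0 \<Longrightarrow> n \<ge> 1 \<Longrightarrow> Delta w (fht_upper w Q s) = Delta w Q"
  unfolding fht_upper_def by (rule Delta_rotate)

lemma fht_upper_inj:
  assumes "one_per_row n w Q" "one_per_row n w Q'" "w > 0" "n \<ge> 1"
    and "fht_upper w Q s = fht_upper w Q' s"
  shows "Q = Q'"
proof -
  have "Delta w Q = Delta w Q'"
    using Delta_fht_upper[OF assms(1,3,4), of s] Delta_fht_upper[OF assms(2,3,4), of s] assms(5) by simp
  then show ?thesis using rotate_inj[OF assms(1-3)] assms(5) by (simp add: fht_upper_def)
qed

text \<open>Within a row, the two candidate upper halves of a pattern differ by one column.\<close>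

lemma fht_upper_disjoint:
  assumes "one_per_row n w Q" "w \<ge> 2" "s \<in> {0, 1}" "s' \<in> {0, 1}" "s \<noteq> s'"
  shows "fht_upper w Q s \<inter> fht_upper w Q s' = {}"
proof (rule ccontr)
  assume "fht_upper w Q s \<inter> fht_upper w Q s' \<noteq> {}"
  then obtain i c where "(i, c) \<in> fht_upper w Q s" "(i, c) \<in> fht_upper w Q s'" by auto
  then obtain j j' where "(i, j) \<in> Q" "(i, j') \<in> Q"
    "(j + (Delta w Q + s)) mod w = (j' + (Delta w Q + s')) mod w"
    unfolding fht_upper_def mem_tran_iff by auto
  then have "(j + Delta w Q + s) mod w = (j + Delta w Q + s') mod w"
    using one_per_row_memD(3)[OF assms(1)] by (metis add.assoc)
  then have "s = s'" by (rule add_mod_bit_cancel[OF _ assms(3,4,2)])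
  then show False using assms(5) by simp
qed

lemma fht_upper_eq_common_point:
  assumes "one_per_row n w Q" "one_per_row n w Q'" "w \<ge> 2" "n \<ge> 1"
    and "(i, j) \<in> Q" "(i, j) \<in> Q'" "s \<in> {0, 1}" "s' \<in> {0, 1}"
    and "fht_upper w Q s = fht_upper w Q' s'"
  shows "s = s'"
proof -
  let ?R = "fht_upper w Q s"
  have R: "one_per_row n w ?R" using one_per_row_fht_upper[OF assms(1)] assms(3) by simp
  have "Delta w Q = Delta w Q'"
    using Delta_fht_upper[OF assms(1) _ assms(4), of s] Delta_fht_upper[OF assms(2) _ assms(4), of s']
      assms(3,9) by simp
  have "(i, (j + (Delta w Q + s)) mod w) \<in> ?R"
    using assms(5) by (auto simp: fht_upper_def mem_tran_iff)
  moreover have "(i, (j + (Delta w Q' + s')) mod w) \<in> fht_upper w Q' s'"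
    using assms(6) by (auto simp: fht_upper_def mem_tran_iff)
  then have "(i, (j + (Delta w Q + s')) mod w) \<in> ?R"
    using assms(9) \<open>Delta w Q = Delta w Q'\<close> by simp
  ultimately have "(j + Delta w Q + s) mod w = (j + Delta w Q + s') mod w"
    using one_per_row_memD(3)[OF R] by (metis add.assoc)
  then show ?thesis by (rule add_mod_bit_cancel[OF _ assms(7,8,3)])
qed

lemma fht_step_inj:
  assumes "w \<ge> 2" "Q \<in> FHT_level w k" "Q' \<in> FHT_level w k" "s \<in> {0, 1}" "s' \<in> {0, 1}"
    and "fht_step w k Q s = fht_step w k Q' s'"
  shows "Q = Q'" "s = s'"
proof -
  have w: "w > 0" using assms(1) by simp
  have pQ: "one_per_row (2 ^ k) w Q" "one_per_row (2 ^ k) w Q'"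
    using one_per_row_FHT_level w assms(2,3) by blast+
  show "Q = Q'" using rows_fht_step(1)[OF pQ(1) w, of s] rows_fht_step(1)[OF pQ(2) w, of s'] assms(6)
    by metis
  then have "fht_upper w Q s = fht_upper w Q s'"
    using rows_fht_step(2)[OF pQ(1) w, of s] rows_fht_step(2)[OF pQ(2) w, of s'] assms(6) by metis
  moreover have "fht_upper w Q s \<noteq> {}"
    using one_per_row_card[OF one_per_row_fht_upper[OF pQ(1) w]] by (metis card.empty power_not_zero zero_neq_numeral)
  ultimately show "s = s'" using fht_upper_disjoint[OF pQ(1) assms(1,4,5)] by blast
qed

lemma card_FHT_level: "w \<ge> 2 \<Longrightarrow> card (FHT_level w k) = w * 2 ^ k"
proof (induction k)
  case 0
  have "FHT_level w 0 = (\<lambda>j. {(0, j)}) ` {..<w}" by auto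
  then show ?case by (simp add: card_image inj_on_def)
next
  case (Suc k)
  have "inj_on (\<lambda>(Q, s). fht_step w k Q s) (FHT_level w k \<times> {0, 1})"
  proof (rule inj_onI)
    fix x y assume "x \<in> FHT_level w k \<times> {0, 1}" "y \<in> FHT_level w k \<times> {0, 1}"
      "(\<lambda>(Q, s). fht_step w k Q s) x = (\<lambda>(Q, s). fht_step w k Q s) y"
    then show "x = y"
      using fht_step_inj[OF Suc.prems, of "fst x" k "fst y" "snd x" "snd y"] by (cases x, cases y) simp
  qed
  then have "card (FHT_level w (Suc k)) = card (FHT_level w k \<times> {0::nat, 1})"
    unfolding FHT_level_Suc_eq by (rule card_image)
  then show ?case using Suc by (simp add: card_cartesian_product)
qed

lemma FHT_level_extend:
  "w > 0 \<Longrightarrow> k \<le> d \<Longrightarrow> Q \<in> FHT_level w k \<Longrightarrow> \<exists>P \<in> FHT_level w d. rows_below (2 ^ k) P = Q"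
proof (induction d)
  case 0
  then have "k = 0" by simp
  moreover have "rows_below (2 ^ k) Q = Q"
    using rows_below_one_per_row[OF one_per_row_FHT_level[OF 0(1,3)]] .
  ultimately show ?case using 0(3) by auto
next
  case (Suc d)
  show ?case
  proof (cases "k = Suc d")
    case True
    then show ?thesis using Suc.prems rows_below_one_per_row one_per_row_FHT_level by metis
  next
    case False
    then have kd: "k \<le> d" using Suc.prems by simp
    obtain P where P: "P \<in> FHT_level w d" "rows_below (2 ^ k) P = Q" using Suc.IH Suc.prems kd by blast
    have "rows_below (2 ^ k) (fht_step w d P 0) = Q"
      using rows_below_fht_step power_increasing[OF kd, of "2::nat"] P(2) by simp
    then show ?thesis using fht_step_in_FHT_level[OF P(1)] by blast
  qed
qed

section \<open>How many patterns contain a set of pixels\<close>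

definition FHT_supersets :: "nat \<Rightarrow> nat \<Rightarrow> pixel set \<Rightarrow> pixel set set" where
  "FHT_supersets w k S = {P \<in> FHT_level w k. S \<subseteq> P}"

definition covering_steps :: "nat \<Rightarrow> nat \<Rightarrow> pixel set \<Rightarrow> pixel set \<Rightarrow> (pixel set \<times> nat) set" where
  "covering_steps w k A D =
     {(Q, s). Q \<in> FHT_level w k \<and> s \<in> {0, 1} \<and> A \<subseteq> Q \<and> D \<subseteq> fht_upper w Q s}"

lemma finite_FHT_supersets: "finite (FHT_supersets w k S)"
  unfolding FHT_supersets_def using finite_FHT_level by simp

lemma finite_covering_steps: "finite (covering_steps w k A D)"
proof -
  have "covering_steps w k A D \<subseteq> FHT_level w k \<times> {0, 1}" unfolding covering_steps_def by auto
  then show ?thesis using finite_FHT_level finite_subset by blast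
qed

lemma FHT_supersets_Suc:
  assumes "w > 0"
  shows "FHT_supersets w (Suc k) S = (\<lambda>(Q, s). fht_step w k Q s) `
           covering_steps w k (rows_below (2 ^ k) S) (rows_from (2 ^ k) S)"
proof -
  have iff: "S \<subseteq> fht_step w k Q s \<longleftrightarrow> rows_below (2 ^ k) S \<subseteq> Q \<and> rows_from (2 ^ k) S \<subseteq> fht_upper w Q s"
    if "Q \<in> FHT_level w k" for Q s
    using subset_iff_rows_split[of S _ "2 ^ k"] rows_fht_step[OF one_per_row_FHT_level[OF assms that] assms]
    by simp
  show ?thesis
  proof (intro equalityI subsetI)
    fix P assume "P \<in> FHT_supersets w (Suc k) S"
    then obtain Q s where "Q \<in> FHT_level w k" "s \<in> {0, 1}" "P = fht_step w k Q s" "S \<subseteq> P"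
      unfolding FHT_supersets_def by (metis (no_types, lifting) FHT_level_SucE mem_Collect_eq)
    with iff show "P \<in> (\<lambda>(Q, s). fht_step w k Q s) `
           covering_steps w k (rows_below (2 ^ k) S) (rows_from (2 ^ k) S)"
      unfolding covering_steps_def by (auto intro!: image_eqI[of _ _ "(Q, s)"])
  next
    fix P assume "P \<in> (\<lambda>(Q, s). fht_step w k Q s) `
           covering_steps w k (rows_below (2 ^ k) S) (rows_from (2 ^ k) S)"
    then obtain Q s where "(Q, s) \<in> covering_steps w k (rows_below (2 ^ k) S) (rows_from (2 ^ k) S)"
      "P = fht_step w k Q s" by auto
    with iff show "P \<in> FHT_supersets w (Suc k) S"
      using fht_step_in_FHT_level unfolding covering_steps_def FHT_supersets_def by auto
  qed
qed

lemma card_covering_steps_le_lower: "card (covering_steps w k A D) \<le> 2 * card (FHT_supersets w k A)"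
proof -
  have "covering_steps w k A D \<subseteq> FHT_supersets w k A \<times> {0, 1}"
    unfolding covering_steps_def FHT_supersets_def by auto
  then have "card (covering_steps w k A D) \<le> card (FHT_supersets w k A \<times> {0::nat, 1})"
    by (rule card_mono[rotated]) (simp add: finite_FHT_supersets)
  then show ?thesis by (simp add: card_cartesian_product)
qed

lemma card_covering_steps_le_upper:
  assumes "w > 0"
  shows "card (covering_steps w k A D) \<le> 2 * card (FHT_supersets w k D)"
proof -
  let ?f = "\<lambda>(Q, s). (fht_upper w Q s, s)"
  have "inj_on ?f (covering_steps w k A D)"
  proof (rule inj_onI)
    fix x y assume x: "x \<in> covering_steps w k A D" and y: "y \<in> covering_steps w k A D"
      and eq: "?f x = ?f y"
    obtain Q s Q' where xy: "x = (Q, s)" "y = (Q', s)" using eq by (cases x, cases y) auto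
    have "Q \<in> FHT_level w k" "Q' \<in> FHT_level w k" using x y xy unfolding covering_steps_def by auto
    then have "Q = Q'"
      using fht_upper_inj[OF one_per_row_FHT_level[OF assms] one_per_row_FHT_level[OF assms] assms]
        eq xy by simp
    then show "x = y" using xy by simp
  qed
  moreover have "?f ` covering_steps w k A D \<subseteq> FHT_supersets w k D \<times> {0, 1}"
    using fht_upper_in_FHT_level[OF assms] unfolding covering_steps_def FHT_supersets_def by auto
  ultimately have "card (covering_steps w k A D) \<le> card (FHT_supersets w k D \<times> {0::nat, 1})"
    by (rule card_inj_on_le) (simp add: finite_FHT_supersets)
  then show ?thesis by (simp add: card_cartesian_product)
qed

text \<open>A nonempty upper part fixes the bit \<open>s\<close>, and a nonempty lower part makes the upper
  half \<open>fht_upper w Q s\<close> determine the pair \<open>(Q, s)\<close>.\<close>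

lemma card_covering_steps_le_lower_nonempty:
  assumes "w \<ge> 2" "D \<noteq> {}"
  shows "card (covering_steps w k A D) \<le> card (FHT_supersets w k A)"
proof -
  have "inj_on fst (covering_steps w k A D)"
  proof (rule inj_onI)
    fix x y assume x: "x \<in> covering_steps w k A D" and y: "y \<in> covering_steps w k A D"
      and "fst x = fst y"
    then obtain Q s s' where xy: "x = (Q, s)" "y = (Q, s')" by (cases x, cases y) auto
    have "one_per_row (2 ^ k) w Q" using x xy assms(1) one_per_row_FHT_level
      unfolding covering_steps_def by auto
    moreover have "D \<subseteq> fht_upper w Q s \<inter> fht_upper w Q s'" "s \<in> {0, 1}" "s' \<in> {0, 1}"
      using x y xy unfolding covering_steps_def by auto
    ultimately show "x = y" using fht_upper_disjoint assms xy by blast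
  qed
  moreover have "fst ` covering_steps w k A D \<subseteq> FHT_supersets w k A"
    unfolding covering_steps_def FHT_supersets_def by auto
  ultimately show ?thesis by (rule card_inj_on_le) (simp add: finite_FHT_supersets)
qed

lemma card_covering_steps_le_upper_nonempty:
  assumes "w \<ge> 2" "A \<noteq> {}"
  shows "card (covering_steps w k A D) \<le> card (FHT_supersets w k D)"
proof -
  have w: "w > 0" using assms(1) by simp
  let ?f = "\<lambda>(Q, s). fht_upper w Q s"
  have "inj_on ?f (covering_steps w k A D)"
  proof (rule inj_onI)
    fix x y assume x: "x \<in> covering_steps w k A D" and y: "y \<in> covering_steps w k A D"
      and eq: "?f x = ?f y"
    obtain Q s Q' s' where xy: "x = (Q, s)" "y = (Q', s')" by (cases x, cases y) auto
    have m: "Q \<in> FHT_level w k" "Q' \<in> FHT_level w k" "s \<in> {0, 1}" "s' \<in> {0, 1}" "A \<subseteq> Q" "A \<subseteq> Q'"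
      using x y xy unfolding covering_steps_def by auto
    have pQ: "one_per_row (2 ^ k) w Q" "one_per_row (2 ^ k) w Q'"
      using one_per_row_FHT_level[OF w] m(1,2) by auto
    obtain i j where "(i, j) \<in> A" using assms(2) by auto
    then have "s = s'"
      using fht_upper_eq_common_point[OF pQ assms(1) _ _ _ m(3,4)] m(5,6) eq xy by auto
    then show "x = y" using fht_upper_inj[OF pQ w] eq xy by auto
  qed
  moreover have "?f ` covering_steps w k A D \<subseteq> FHT_supersets w k D"
    using fht_upper_in_FHT_level[OF w] unfolding covering_steps_def FHT_supersets_def by auto
  ultimately show ?thesis by (rule card_inj_on_le) (simp add: finite_FHT_supersets)
qed

lemma card_FHT_supersets_0:
  assumes "S \<noteq> {}"
  shows "card (FHT_supersets w 0 S) * card S \<le> 1"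
proof (cases "FHT_supersets w 0 S = {}")
  case False
  then obtain j where "S \<subseteq> {(0, j)}" unfolding FHT_supersets_def by auto
  then have "S = {(0, j)}" using assms by auto
  then have "FHT_supersets w 0 S \<subseteq> {S}" unfolding FHT_supersets_def by auto
  then have "card (FHT_supersets w 0 S) \<le> 1" using card_mono[of "{S}"] by fastforce
  then show ?thesis using \<open>S = {(0, j)}\<close> by simp
qed simp

theorem card_FHT_supersets:
  assumes "w \<ge> 2" "S \<noteq> {}"
  shows "card (FHT_supersets w k S) * card S \<le> 2 ^ k"
  using assms(2)
proof (induction k arbitrary: S)
  case 0
  then show ?case using card_FHT_supersets_0 by simp
next
  case (Suc k)
  have w: "w > 0" using assms(1) by simp
  define A where "A = rows_below (2 ^ k) S"
  define D where "D = rows_from (2 ^ k) S"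
  define c where "c = card (FHT_supersets w (Suc k) S)"
  have c: "c \<le> card (covering_steps w k A D)"
    unfolding c_def A_def D_def FHT_supersets_Suc[OF w] by (rule card_image_le[OF finite_covering_steps])
  show ?case
  proof (cases "c = 0")
    case False
    then obtain P where "P \<in> FHT_level w (Suc k)" "S \<subseteq> P"
      unfolding c_def FHT_supersets_def by (metis (no_types, lifting) card.empty ex_in_conv mem_Collect_eq)
    then have "finite S" using one_per_row_finite[OF one_per_row_FHT_level[OF w]] finite_subset by blast
    then have S: "card S = card A + card D" unfolding A_def D_def by (rule card_rows_split)
    consider "D = {}" "A \<noteq> {}" | "A = {}" "D \<noteq> {}" | "A \<noteq> {}" "D \<noteq> {}"
      using Suc.prems empty_iff_rows_split unfolding A_def D_def by blast
    then show ?thesis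
    proof cases
      case 1
      have "c * card S \<le> 2 * card (FHT_supersets w k A) * card A"
        using c card_covering_steps_le_lower[of w k A D] S 1(1) by (simp add: mult_le_mono1)
      also have "\<dots> \<le> 2 * 2 ^ k" using Suc.IH[OF 1(2)] by simp
      finally show ?thesis unfolding c_def by simp
    next
      case 2
      have "c * card S \<le> 2 * card (FHT_supersets w k D) * card D"
        using c card_covering_steps_le_upper[OF w, of k A D] S 2(1) by (simp add: mult_le_mono1)
      also have "\<dots> \<le> 2 * 2 ^ k" using Suc.IH[OF 2(2)] by simp
      finally show ?thesis unfolding c_def by simp
    next
      case 3
      have "c * card S = c * card A + c * card D" using S by (simp add: add_mult_distrib2)
      also have "\<dots> \<le> card (FHT_supersets w k A) * card A + card (FHT_supersets w k D) * card D"
        using c card_covering_steps_le_lower_nonempty[OF assms(1) 3(2)]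
          card_covering_steps_le_upper_nonempty[OF assms(1) 3(1)]
        by (intro add_mono mult_le_mono1) (rule le_trans, assumption+)+
      also have "\<dots> \<le> 2 ^ k + 2 ^ k" using Suc.IH 3 by (intro add_mono)
      finally show ?thesis unfolding c_def by simp
    qed
  qed (simp add: c_def)
qed

section \<open>Circuits and reachability\<close>

lemma circuitD:
  assumes "is_circuit I \<T> V E inp out"
  shows "finite V" "E \<subseteq> V \<times> V" "\<And>v. (v, v) \<notin> E\<^sup>+" "inj_on inp I" "inp ` I \<subseteq> V"
    "\<And>p. p \<in> I \<Longrightarrow> preds E (inp p) = {}" "\<And>v. v \<in> V \<Longrightarrow> preds E v = {} \<Longrightarrow> v \<in> inp ` I"
    "inj_on out \<T>" "out ` \<T> \<subseteq> V" "\<And>T u. T \<in> \<T> \<Longrightarrow> (out T, u) \<notin> E"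
  using assms unfolding is_circuit_def by simp_all

lemma wf_circuit_edges: "is_circuit I \<T> V E inp out \<Longrightarrow> wf E"
  using circuitD(1-3) finite_subset[of E "V \<times> V"]
  by (metis acyclic_def finite_SigmaI finite_acyclic_wf)

lemma preds_subset: "E \<subseteq> V \<times> V \<Longrightarrow> preds E v \<subseteq> V"
  unfolding preds_def by blast

lemma finite_preds: "E \<subseteq> V \<times> V \<Longrightarrow> finite V \<Longrightarrow> finite (preds E v)"
  by (rule finite_subset[OF preds_subset])

lemma rtrancl_preds_iff: "(a, v) \<in> E\<^sup>* \<longleftrightarrow> a = v \<or> (\<exists>u \<in> preds E v. (a, u) \<in> E\<^sup>*)"
proof
  assume "(a, v) \<in> E\<^sup>*"
  then show "a = v \<or> (\<exists>u \<in> preds E v. (a, u) \<in> E\<^sup>*)"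
    by (rule rtranclE) (auto simp: preds_def)
next
  assume "a = v \<or> (\<exists>u \<in> preds E v. (a, u) \<in> E\<^sup>*)"
  then show "(a, v) \<in> E\<^sup>*" unfolding preds_def by (auto intro: rtrancl_into_rtrancl)
qed

lemma rtrancl_no_preds: "preds E v = {} \<Longrightarrow> (a, v) \<in> E\<^sup>* \<longleftrightarrow> a = v"
  using rtrancl_preds_iff[of a v E] by simp

text \<open>In a circuit fed with the indicator of a single input \<open>p\<close>, a node carries a nonzero
  (true) value exactly when it is reachable from \<open>p\<close>.\<close>

lemma circuit_value_reach:
  assumes c: "is_circuit I \<T> V E inp out" and p: "p \<in> I"
    and inputs: "\<And>q. q \<in> I \<Longrightarrow> pos (inp q) \<longleftrightarrow> q = p"
    and gates: "\<And>v. v \<in> V \<Longrightarrow> preds E v \<noteq> {} \<Longrightarrow> pos v \<longleftrightarrow> (\<exists>u \<in> preds E v. pos u)"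
  shows "v \<in> V \<Longrightarrow> pos v \<longleftrightarrow> (inp p, v) \<in> E\<^sup>*"
proof (induction v rule: wf_induct_rule[OF wf_circuit_edges[OF c]])
  case (1 v)
  show ?case
  proof (cases "preds E v = {}")
    case True
    then obtain q where q: "q \<in> I" "v = inp q" using circuitD(7)[OF c] 1(2) by blast
    have "(inp p, v) \<in> E\<^sup>* \<longleftrightarrow> inp p = inp q" using rtrancl_no_preds[OF True] q(2) by simp
    also have "\<dots> \<longleftrightarrow> q = p" using circuitD(4)[OF c] p q(1) by (auto dest: inj_onD)
    finally show ?thesis using inputs q by simp
  next
    case False
    have "u \<in> V" "(u, v) \<in> E" if "u \<in> preds E v" for u
      using that preds_subset[OF circuitD(2)[OF c]] unfolding preds_def by auto
    then have "pos v \<longleftrightarrow> (\<exists>u \<in> preds E v. (inp p, u) \<in> E\<^sup>*)"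
      using gates[OF 1(2) False] 1(1) by blast
    moreover have "inp p \<noteq> v" using False circuitD(6)[OF c p] by auto
    ultimately show ?thesis using rtrancl_preds_iff by blast
  qed
qed

lemma computes_OR_reach:
  assumes c: "is_circuit I \<T> V E inp out" and "computes_OR I \<T> V E inp out"
    and T: "T \<in> \<T>" and p: "p \<in> I"
  shows "p \<in> T \<longleftrightarrow> (inp p, out T) \<in> E\<^sup>*"
proof -
  obtain val where val: "\<forall>q\<in>I. val (inp q) = (q = p)"
    "\<forall>v\<in>V. preds E v \<noteq> {} \<longrightarrow> val v = (\<exists>u\<in>preds E v. val u)"
    "\<forall>T\<in>\<T>. val (out T) = (\<exists>q\<in>T. q = p)"
    using assms(2) unfolding computes_OR_def by (elim allE[of _ "\<lambda>q. q = p"] exE) blast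
  have "out T \<in> V" using circuitD(9)[OF c] T by blast
  then show ?thesis using circuit_value_reach[OF c p, of val] val T by auto
qed

lemma computes_SUM_reach:
  assumes c: "is_circuit I \<T> V E inp out" and "computes_SUM I \<T> V E inp out"
    and T: "T \<in> \<T>" "finite T" and p: "p \<in> I"
  shows "p \<in> T \<longleftrightarrow> (inp p, out T) \<in> E\<^sup>*"
proof -
  define x where "x q = (if q = p then 1 else 0 :: nat)" for q
  obtain val where val: "\<forall>q\<in>I. val (inp q) = x q"
    "\<forall>v\<in>V. preds E v \<noteq> {} \<longrightarrow> val v = (\<Sum>u\<in>preds E v. val u)"
    "\<forall>T\<in>\<T>. val (out T) = (\<Sum>q\<in>T. x q)"
    using assms(2) unfolding computes_SUM_def by blast
  have "val v \<noteq> 0 \<longleftrightarrow> (\<exists>u\<in>preds E v. val u \<noteq> 0)" if "v \<in> V" "preds E v \<noteq> {}" for v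
    using val(2) that finite_preds[OF circuitD(2,1)[OF c]] by simp
  moreover have "val (out T) \<noteq> 0 \<longleftrightarrow> p \<in> T" using val(3) T unfolding x_def by simp
  moreover have "out T \<in> V" using circuitD(9)[OF c] T by blast
  ultimately show ?thesis
    using circuit_value_reach[OF c p, of "\<lambda>v. val v \<noteq> 0"] val(1) unfolding x_def by auto
qed

lemma computes_reach:
  assumes c: "is_circuit I \<T> V E inp out" and "finite I" "\<And>T. T \<in> \<T> \<Longrightarrow> T \<subseteq> I"
    and "computes_OR I \<T> V E inp out \<or> computes_SUM I \<T> V E inp out"
    and T: "T \<in> \<T>" and p: "p \<in> I"
  shows "p \<in> T \<longleftrightarrow> (inp p, out T) \<in> E\<^sup>*"
proof -
  have "finite T" using assms(2,3) T finite_subset by blast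
  then show ?thesis using assms(4) computes_OR_reach[OF c _ T p] computes_SUM_reach[OF c _ T _ p] by blast
qed

lemma card_edges_eq_sum_fanin:
  assumes "E \<subseteq> V \<times> V" "finite V"
  shows "card E = (\<Sum>v\<in>V. card (preds E v))"
proof -
  have "E = (\<lambda>(v, u). (u, v)) ` (SIGMA v:V. preds E v)"
    using assms(1) unfolding preds_def by force
  moreover have "inj_on (\<lambda>(v, u). (u, v)) (SIGMA v:V. preds E v)" by (auto simp: inj_on_def)
  ultimately have "card E = card (SIGMA v:V. preds E v)" by (metis card_image)
  also have "\<dots> = (\<Sum>v\<in>V. card (preds E v))" using assms finite_preds by (simp add: card_SigmaI)
  finally show ?thesis .
qed

lemma card_edges_le_gates:
  assumes "is_circuit I \<T> V E inp out" "fanin2 E"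
  shows "real (card E) \<le> 2 * real (card (gates V E))"
proof -
  note c = circuitD(1,2)[OF assms(1)]
  have "card E = (\<Sum>v\<in>V. card (preds E v))" by (rule card_edges_eq_sum_fanin[OF c(2,1)])
  also have "\<dots> = (\<Sum>v\<in>gates V E. card (preds E v))"
    unfolding gates_def by (rule sum.mono_neutral_right) (use c in auto)
  also have "\<dots> \<le> (\<Sum>v\<in>gates V E. 2)"
    by (rule sum_mono) (use assms(2) in \<open>auto simp: fanin2_def\<close>)
  finally have "card E \<le> 2 * card (gates V E)" by simp
  then have "real (card E) \<le> real (2 * card (gates V E))" by (rule of_nat_mono)
  then show ?thesis by simp
qed

section \<open>A Kraft inequality and a lower bound on the number of edges\<close>

definition ancestors :: "nat set \<Rightarrow> (nat \<times> nat) set \<Rightarrow> nat \<Rightarrow> nat set" where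
  "ancestors V E v = {g \<in> V. (g, v) \<in> E\<^sup>*}"

definition input_support :: "pixel set \<Rightarrow> (nat \<times> nat) set \<Rightarrow> (pixel \<Rightarrow> nat) \<Rightarrow> nat \<Rightarrow> pixel set" where
  "input_support I E inp v = {p \<in> I. (inp p, v) \<in> E\<^sup>*}"

definition fanin_weight ::
  "pixel set \<Rightarrow> nat set \<Rightarrow> (nat \<times> nat) set \<Rightarrow> (pixel \<Rightarrow> nat) \<Rightarrow> pixel \<Rightarrow> nat \<Rightarrow> nat" where
  "fanin_weight I V E inp p v =
     (\<Sum>g \<in> {g \<in> ancestors V E v. p \<in> input_support I E inp g}. card (preds E g))"

lemma input_support_mono: "(g, v) \<in> E\<^sup>* \<Longrightarrow> input_support I E inp g \<subseteq> input_support I E inp v"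
  unfolding input_support_def by (auto intro: rtrancl_trans)

lemma input_support_preds:
  assumes c: "is_circuit I \<T> V E inp out" and "preds E v \<noteq> {}" "p \<in> input_support I E inp v"
  shows "\<exists>u \<in> preds E v. p \<in> input_support I E inp u"
proof -
  have p: "p \<in> I" "(inp p, v) \<in> E\<^sup>*" using assms(3) unfolding input_support_def by auto
  then have "inp p \<noteq> v" using assms(2) circuitD(6)[OF c p(1)] by auto
  then show ?thesis using p rtrancl_preds_iff[of "inp p" v E] unfolding input_support_def by auto
qed

lemma fanin_weight_step:
  assumes c: "is_circuit I \<T> V E inp out" and "v \<in> V" "u \<in> preds E v" "p \<in> input_support I E inp u"
  shows "card (preds E v) + fanin_weight I V E inp p u \<le> fanin_weight I V E inp p v"
proof -
  let ?S = "input_support I E inp"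
  let ?A = "{g \<in> ancestors V E u. p \<in> ?S g}"
  let ?B = "{g \<in> ancestors V E v. p \<in> ?S g}"
  have uv: "(u, v) \<in> E" using assms(3) unfolding preds_def by simp
  have "v \<notin> ?A"
    using circuitD(3)[OF c] rtrancl_into_trancl1[of v u E v] uv unfolding ancestors_def by blast
  moreover have "insert v ?A \<subseteq> ?B"
    using assms(2,4) uv input_support_mono[of u v E I inp]
    unfolding ancestors_def by (auto intro: rtrancl_into_rtrancl)
  moreover have "finite ?B" using circuitD(1)[OF c] unfolding ancestors_def by simp
  ultimately have "(\<Sum>g\<in>insert v ?A. card (preds E g)) \<le> (\<Sum>g\<in>?B. card (preds E g))"
    by (intro sum_mono2) auto
  moreover have "finite ?A" using circuitD(1)[OF c] unfolding ancestors_def by simp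
  ultimately show ?thesis unfolding fanin_weight_def using \<open>v \<notin> ?A\<close> by simp
qed

lemma cube_le_3_power: "(k::nat) ^ 3 \<le> 3 ^ k"
proof (induction k rule: less_induct)
  case (less k)
  show ?case
  proof (cases "k \<le> 3")
    case True
    then have "k = 0 \<or> k = 1 \<or> k = 2 \<or> k = 3" by auto
    then show ?thesis by auto
  next
    case False
    then obtain j where j: "k = Suc j" "j \<ge> 3" by (metis Suc_pred not_le not_less_eq_eq zero_less_iff_neq_zero)
    have "3 * j ^ 2 \<le> j ^ 3"
      using mult_le_mono1[OF j(2), of "j ^ 2"] by (simp add: power2_eq_square power3_eq_cube)
    moreover have "9 * j \<le> j ^ 3"
      using mult_le_mono1[OF mult_le_mono[OF j(2) j(2)], of j] by (simp add: power3_eq_cube)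
    moreover have "Suc j ^ 3 = j ^ 3 + 3 * j ^ 2 + 3 * j + 1"
      by (simp add: power3_eq_cube power2_eq_square algebra_simps)
    ultimately have "Suc j ^ 3 \<le> 3 * j ^ 3" using j(2) by linarith
    also have "\<dots> \<le> 3 * 3 ^ j" using less j by simp
    finally show ?thesis using j by simp
  qed
qed

lemma real_le_3_powr_third: "real k \<le> 3 powr (real k / 3)"
proof -
  have "real k ^ 3 \<le> 3 ^ k" using cube_le_3_power[of k] by (metis of_nat_le_iff of_nat_numeral of_nat_power)
  also have "(3::real) ^ k = (3 powr (real k / 3)) ^ 3" by (simp add: powr_realpow[symmetric] powr_powr)
  finally have "real k ^ Suc 2 \<le> (3 powr (real k / 3)) ^ Suc 2" by simp
  then show ?thesis by (rule power_le_imp_le_base) simp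
qed

lemma gibbs_uniform:
  fixes G :: "'a \<Rightarrow> real"
  assumes "finite A" "A \<noteq> {}" "b > 1" "(\<Sum>p\<in>A. b powr (- G p)) \<le> 1"
  shows "real (card A) * ln (real (card A)) \<le> ln b * (\<Sum>p\<in>A. G p)"
proof -
  define m where "m = real (card A)"
  have m: "m > 0" using assms(1,2) unfolding m_def by (simp add: card_gt_0_iff)
  have "ln m - ln b * G p \<le> m * b powr (- G p) - 1" for p
  proof -
    have "ln (m * b powr (- G p)) = ln m - ln b * G p"
      using m assms(3) by (simp add: ln_mult ln_powr)
    moreover have "m * b powr (- G p) > 0" using m assms(3) by simp
    ultimately show ?thesis using ln_le_minus_one[of "m * b powr (- G p)"] by simp
  qed
  then have "(\<Sum>p\<in>A. ln m - ln b * G p) \<le> (\<Sum>p\<in>A. m * b powr (- G p) - 1)"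
    by (rule sum_mono)
  also have "\<dots> = m * (\<Sum>p\<in>A. b powr (- G p)) - m"
    unfolding m_def by (simp add: sum_subtractf sum_distrib_left)
  also have "\<dots> \<le> 0" using assms(4) m by (simp add: mult_left_le)
  finally show ?thesis unfolding m_def by (simp add: sum_subtractf sum_distrib_left)
qed

lemma sum_input_support_preds:
  assumes "finite I" "finite (preds E v)"
  shows "(\<Sum>p\<in>input_support I E inp v. \<Sum>u\<in>{u \<in> preds E v. p \<in> input_support I E inp u}. f p u)
    = (\<Sum>u\<in>preds E v. \<Sum>p\<in>input_support I E inp u. f p u)"
proof -
  let ?S = "input_support I E inp"
  have "finite (?S v)" unfolding input_support_def using assms(1) by simp
  then have "(\<Sum>p\<in>?S v. \<Sum>u\<in>{u \<in> preds E v. p \<in> ?S u}. f p u)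
      = (\<Sum>u\<in>preds E v. \<Sum>p\<in>{p \<in> ?S v. p \<in> ?S u}. f p u)"
    using assms(2) by (rule sum.swap_restrict)
  also have "\<dots> = (\<Sum>u\<in>preds E v. \<Sum>p\<in>?S u. f p u)"
  proof (rule sum.cong[OF refl])
    fix u assume "u \<in> preds E v"
    then have "{p \<in> ?S v. p \<in> ?S u} = ?S u"
      using input_support_mono[of u v E I inp] unfolding preds_def by auto
    then show "(\<Sum>p\<in>{p \<in> ?S v. p \<in> ?S u}. f p u) = (\<Sum>p\<in>?S u. f p u)" by simp
  qed
  finally show ?thesis .
qed

text \<open>If \<open>v\<close> is a gate of fanin \<open>k\<close>, every input below a
  predecessor \<open>u\<close> of \<open>v\<close> weighs at least \<open>k\<close> more at \<open>v\<close> than at \<open>u\<close>. So the sum at \<open>v\<close> is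
  at most \<open>3 powr (- k / 3)\<close> times the sum of the \<open>k\<close> sums at the predecessors, hence at
  most \<open>k * 3 powr (- k / 3) \<le> 1\<close>.\<close>

lemma kraft_fanin_weight:
  assumes c: "is_circuit I \<T> V E inp out" and "finite I" "v \<in> V"
  shows "(\<Sum>p\<in>input_support I E inp v. (3::real) powr (- (real (fanin_weight I V E inp p v) / 3))) \<le> 1"
  using assms(3)
proof (induction v rule: wf_induct_rule[OF wf_circuit_edges[OF c]])
  case (1 v)
  let ?S = "input_support I E inp"
  let ?f = "\<lambda>p u. (3::real) powr (- (real (fanin_weight I V E inp p u) / 3))"
  note cc = circuitD[OF c]
  show ?case
  proof (cases "preds E v = {}")
    case True
    then obtain q where q: "q \<in> I" "v = inp q" using cc(7) 1(2) by blast
    have "?S v = {q}"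
      using rtrancl_no_preds[OF True] q cc(4) unfolding input_support_def by (auto dest: inj_onD)
    moreover have "?f q v \<le> 3 powr 0" by (rule powr_mono) auto
    ultimately show ?thesis by simp
  next
    case False
    let ?C = "preds E v"
    let ?k = "card ?C"
    have finC: "finite ?C" and subC: "?C \<subseteq> V" using finite_preds preds_subset cc(1,2) by auto
    have IH: "(\<Sum>p\<in>?S u. ?f p u) \<le> 1" if "u \<in> ?C" for u
      using 1(1)[of u] that subC unfolding preds_def by blast
    have step: "?f p v \<le> 3 powr (- (real ?k / 3)) * ?f p u" if "u \<in> ?C" "p \<in> ?S u" for p u
    proof -
      have "?k + fanin_weight I V E inp p u \<le> fanin_weight I V E inp p v"
        using fanin_weight_step[OF c 1(2) that] .
      then show ?thesis by (simp add: powr_add[symmetric] add_divide_distrib)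
    qed
    have "(\<Sum>p\<in>?S v. ?f p v) \<le> (\<Sum>p\<in>?S v. 3 powr (- (real ?k / 3)) * (\<Sum>u\<in>{u \<in> ?C. p \<in> ?S u}. ?f p u))"
    proof (rule sum_mono)
      fix p assume "p \<in> ?S v"
      then obtain u where u: "u \<in> ?C" "p \<in> ?S u"
        using input_support_preds[OF c False] by blast
      have "?f p v \<le> 3 powr (- (real ?k / 3)) * ?f p u" by (rule step[OF u])
      also have "\<dots> \<le> 3 powr (- (real ?k / 3)) * (\<Sum>u\<in>{u \<in> ?C. p \<in> ?S u}. ?f p u)"
        by (rule mult_left_mono, rule member_le_sum) (use u finC in auto)
      finally show "?f p v \<le> \<dots>" .
    qed
    also have "\<dots> = 3 powr (- (real ?k / 3)) * (\<Sum>u\<in>?C. \<Sum>p\<in>?S u. ?f p u)"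
      by (simp add: sum_distrib_left[symmetric] sum_input_support_preds[OF assms(2) finC])
    also have "\<dots> \<le> 3 powr (- (real ?k / 3)) * real ?k"
      using sum_mono[of ?C "\<lambda>u. \<Sum>p\<in>?S u. ?f p u" "\<lambda>_. 1"] IH by (intro mult_left_mono) simp_all
    also have "\<dots> = real ?k / 3 powr (real ?k / 3)" by (simp add: powr_minus_divide)
    also have "\<dots> \<le> 1" using real_le_3_powr_third[of ?k] by (simp add: pos_divide_le_eq)
    finally show ?thesis .
  qed
qed

lemma sum_fanin_weight:
  assumes "finite A" "finite V"
  shows "(\<Sum>p\<in>A. fanin_weight I V E inp p v)
    = (\<Sum>g\<in>ancestors V E v. card (preds E g) * card (A \<inter> input_support I E inp g))"
proof -
  have "finite (ancestors V E v)" using assms(2) unfolding ancestors_def by simp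
  then have "(\<Sum>p\<in>A. fanin_weight I V E inp p v)
      = (\<Sum>g\<in>ancestors V E v. \<Sum>p\<in>{p \<in> A. p \<in> input_support I E inp g}. card (preds E g))"
    unfolding fanin_weight_def
    using sum.swap_restrict[OF assms(1), of _ "\<lambda>p g. card (preds E g)" "\<lambda>p g. p \<in> input_support I E inp g"]
    by simp
  also have "\<dots> = (\<Sum>g\<in>ancestors V E v. card (preds E g) * card (A \<inter> input_support I E inp g))"
    by (simp add: Int_def mult.commute)
  finally show ?thesis .
qed

lemma fanin_weight_sum_lower:
  assumes c: "is_circuit I \<T> V E inp out" and "finite I" "T \<in> \<T>"
    and support: "input_support I E inp (out T) = T"
    and "A \<subseteq> T" "A \<noteq> {}"
  shows "3 * real (card A) * log 3 (real (card A)) \<le> (\<Sum>p\<in>A. real (fanin_weight I V E inp p (out T)))"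
proof -
  let ?G = "\<lambda>p. real (fanin_weight I V E inp p (out T)) / 3"
  have "T \<subseteq> I" using support unfolding input_support_def by blast
  then have T: "finite T" "out T \<in> V"
    using assms(2,3) circuitD(9)[OF c] finite_subset by auto
  have A: "finite A" using assms(5) T(1) finite_subset by blast
  have "(\<Sum>p\<in>A. (3::real) powr (- ?G p)) \<le> (\<Sum>p\<in>T. (3::real) powr (- ?G p))"
    by (rule sum_mono2[OF T(1) assms(5)]) simp
  also have "\<dots> \<le> 1" using kraft_fanin_weight[OF c assms(2) T(2)] support by simp
  finally have "real (card A) * ln (real (card A)) \<le> ln 3 * (\<Sum>p\<in>A. ?G p)"
    by (intro gibbs_uniform A assms(6)) simp_all
  then show ?thesis by (simp add: log_def sum_divide_distrib[symmetric] field_simps)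
qed

text \<open>A node lies below a target only if its inputs are contained in the target, so by
  the sharing hypothesis it lies below few targets; this bounds the weights of all targets,
  summed up, by \<open>M\<close> times the number of edges.\<close>

lemma sum_target_weights_le:
  assumes c: "is_circuit I \<T> V E inp out" and "finite \<S>"
    and support: "\<And>T. T \<in> \<S> \<Longrightarrow> input_support I E inp (out T) = T"
    and sharing: "\<And>S. S \<subseteq> I \<Longrightarrow> S \<inter> B \<noteq> {} \<Longrightarrow> card {T \<in> \<S>. S \<subseteq> T} * card (S \<inter> B) \<le> M"
  shows "(\<Sum>T\<in>\<S>. \<Sum>g\<in>ancestors V E (out T). card (preds E g) * card (input_support I E inp g \<inter> B))
    \<le> M * card E"
proof -
  let ?S = "input_support I E inp"
  let ?w = "\<lambda>g. card (preds E g) * card (?S g \<inter> B)"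
  note cc = circuitD[OF c]
  have "(\<Sum>T\<in>\<S>. \<Sum>g\<in>ancestors V E (out T). ?w g) = (\<Sum>g\<in>V. ?w g * card {T \<in> \<S>. (g, out T) \<in> E\<^sup>*})"
    unfolding ancestors_def by (simp add: sum.swap_restrict[OF assms(2) cc(1)] mult.commute)
  also have "\<dots> \<le> (\<Sum>g\<in>V. card (preds E g) * M)"
  proof (rule sum_mono)
    fix g assume "g \<in> V"
    have "{T \<in> \<S>. (g, out T) \<in> E\<^sup>*} \<subseteq> {T \<in> \<S>. ?S g \<subseteq> T}"
      using input_support_mono[of g _ E I inp] support by blast
    then have le: "card {T \<in> \<S>. (g, out T) \<in> E\<^sup>*} \<le> card {T \<in> \<S>. ?S g \<subseteq> T}"
      by (rule card_mono[rotated]) (simp add: assms(2))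
    have sub: "?S g \<subseteq> I" unfolding input_support_def by blast
    have "card (?S g \<inter> B) * card {T \<in> \<S>. (g, out T) \<in> E\<^sup>*} \<le> M"
    proof (cases "?S g \<inter> B = {}")
      case False
      have "card (?S g \<inter> B) * card {T \<in> \<S>. (g, out T) \<in> E\<^sup>*}
          \<le> card (?S g \<inter> B) * card {T \<in> \<S>. ?S g \<subseteq> T}"
        using le by (rule mult_le_mono2)
      also have "\<dots> \<le> M" using sharing[OF sub False] by (simp add: mult.commute)
      finally show ?thesis .
    qed simp
    then show "?w g * card {T \<in> \<S>. (g, out T) \<in> E\<^sup>*} \<le> card (preds E g) * M"
      by (simp add: mult.assoc)
  qed
  also have "\<dots> = M * card E"
    using card_edges_eq_sum_fanin[OF cc(2,1)] by (simp add: sum_distrib_left mult.commute)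
  finally show ?thesis .
qed

theorem card_edges_lower_bound:
  assumes c: "is_circuit I \<T> V E inp out"
    and reach: "\<And>T p. T \<in> \<T> \<Longrightarrow> p \<in> I \<Longrightarrow> p \<in> T \<longleftrightarrow> (inp p, out T) \<in> E\<^sup>*"
    and I: "finite I" "\<And>T. T \<in> \<T> \<Longrightarrow> T \<subseteq> I"
    and \<S>: "\<S> \<subseteq> \<T>" "finite \<S>" "\<And>T. T \<in> \<S> \<Longrightarrow> card (T \<inter> B) = m" "m \<ge> 1"
    and sharing: "\<And>S. S \<subseteq> I \<Longrightarrow> S \<inter> B \<noteq> {} \<Longrightarrow> card {T \<in> \<S>. S \<subseteq> T} * card (S \<inter> B) \<le> M"
  shows "3 * real (card \<S>) * real m * log 3 (real m) \<le> real M * real (card E)"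
proof -
  let ?S = "input_support I E inp"
  let ?w = "\<lambda>g. card (preds E g) * card (?S g \<inter> B)"
  have support: "?S (out T) = T" if "T \<in> \<T>" for T
    using reach[OF that] I(2)[OF that] unfolding input_support_def by auto
  have per_target: "3 * real m * log 3 (real m) \<le> real (\<Sum>g\<in>ancestors V E (out T). ?w g)"
    if T: "T \<in> \<S>" for T
  proof -
    have TT: "T \<in> \<T>" using T \<S>(1) by blast
    have ne: "T \<inter> B \<noteq> {}" using \<S>(3)[OF T] \<S>(4) by auto
    have "finite T" using I(2)[OF TT] I(1) by (rule finite_subset)
    then have finTB: "finite (T \<inter> B)" by simp
    have "3 * real m * log 3 (real m) \<le> (\<Sum>p\<in>T \<inter> B. real (fanin_weight I V E inp p (out T)))"
      using fanin_weight_sum_lower[OF c I(1) TT support[OF TT] _ ne] \<S>(3)[OF T] by simp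
    also have "\<dots> = real (\<Sum>p\<in>T \<inter> B. fanin_weight I V E inp p (out T))" by simp
    also have "\<dots> = real (\<Sum>g\<in>ancestors V E (out T). card (preds E g) * card (T \<inter> B \<inter> ?S g))"
      using sum_fanin_weight[OF finTB circuitD(1)[OF c], of I E inp "out T"] by (simp only:)
    also have "\<dots> \<le> real (\<Sum>g\<in>ancestors V E (out T). ?w g)"
      by (intro of_nat_mono sum_mono mult_le_mono2 card_mono) (auto simp: input_support_def I(1))
    finally show ?thesis .
  qed
  have "3 * real (card \<S>) * real m * log 3 (real m) = (\<Sum>T\<in>\<S>. 3 * real m * log 3 (real m))"
    by simp
  also have "\<dots> \<le> (\<Sum>T\<in>\<S>. real (\<Sum>g\<in>ancestors V E (out T). ?w g))"
    by (rule sum_mono) (rule per_target)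
  also have "\<dots> = real (\<Sum>T\<in>\<S>. \<Sum>g\<in>ancestors V E (out T). ?w g)"
    by (rule of_nat_sum[symmetric])
  also have "\<dots> \<le> real (M * card E)"
    using sum_target_weights_le[OF c \<S>(2) _ sharing] support \<S>(1) by (intro of_nat_mono) blast
  finally show ?thesis by simp
qed

section \<open>Circuits from disjoint decompositions\<close>

locale disjoint_decomposition =
  fixes I :: "pixel set" and N :: "pixel set set" and lpart rpart :: "pixel set \<Rightarrow> pixel set"
    and node :: "pixel set \<Rightarrow> nat"
  assumes finite_I: "finite I"
    and subset_I: "X \<in> N \<Longrightarrow> X \<subseteq> I"
    and empty_notin: "{} \<notin> N"
    and singleton_in: "p \<in> I \<Longrightarrow> {p} \<in> N"
    and split: "X \<in> N \<Longrightarrow> 2 \<le> card X \<Longrightarrow>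
      lpart X \<in> N \<and> rpart X \<in> N \<and> lpart X \<inter> rpart X = {} \<and> X = lpart X \<union> rpart X"
    and inj_node: "inj_on node N"
begin

definition edges :: "(nat \<times> nat) set" where
  "edges = (\<Union>X\<in>{X \<in> N. 2 \<le> card X}. {(node (lpart X), node X), (node (rpart X), node X)})"

definition decode :: "nat \<Rightarrow> pixel set" where
  "decode = the_inv_into N node"

lemma finite_N: "finite N"
  using subset_I finite_I by (meson PowI finite_Pow_iff finite_subset subsetI)

lemma finite_member: "X \<in> N \<Longrightarrow> finite X"
  using subset_I finite_I finite_subset by blast

lemma decode_node [simp]: "X \<in> N \<Longrightarrow> decode (node X) = X"
  unfolding decode_def using inj_node by (rule the_inv_into_f_f)

lemma split_parts:
  assumes "X \<in> N" "2 \<le> card X"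
  shows "lpart X \<in> N" "rpart X \<in> N" "card (lpart X) < card X" "card (rpart X) < card X"
    "node (lpart X) \<noteq> node (rpart X)"
proof -
  note s = split[OF assms]
  show l: "lpart X \<in> N" and r: "rpart X \<in> N" using s by auto
  have ne: "lpart X \<noteq> {}" "rpart X \<noteq> {}" using l r empty_notin by auto
  show "card (lpart X) < card X" "card (rpart X) < card X"
    using s ne finite_member[OF assms(1)] by (auto intro!: psubset_card_mono)
  show "node (lpart X) \<noteq> node (rpart X)"
    using s ne inj_onD[OF inj_node _ l r] by auto
qed

lemma preds_edges_node:
  assumes "X \<in> N"
  shows "preds edges (node X) = (if 2 \<le> card X then {node (lpart X), node (rpart X)} else {})"
  using assms inj_onD[OF inj_node] unfolding edges_def preds_def by auto

lemma edges_subset: "edges \<subseteq> node ` N \<times> node ` N"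
  unfolding edges_def using split_parts(1,2) by blast

lemma preds_edges_outside: "v \<notin> node ` N \<Longrightarrow> preds edges v = {}"
  using edges_subset unfolding preds_def by blast

lemma acyclic_edges: "(v, v) \<notin> edges\<^sup>+"
proof -
  have "edges \<subseteq> inv_image less_than (\<lambda>v. card (decode v))"
    unfolding edges_def using split_parts by auto
  then have "wf edges" by (rule wf_subset[OF wf_inv_image[OF wf_less_than]])
  then show ?thesis using wf_acyclic unfolding acyclic_def by blast
qed

lemma is_circuit_edges:
  assumes "\<T> \<subseteq> N" and maximal: "\<And>X T. X \<in> N \<Longrightarrow> T \<in> \<T> \<Longrightarrow> card X \<le> card T"
  shows "is_circuit I \<T> (node ` N) edges (\<lambda>p. node {p}) node"
  unfolding is_circuit_def
proof (intro conjI allI ballI impI)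
  show "inj_on (\<lambda>p. node {p}) I" using inj_node singleton_in by (auto simp: inj_on_def)
  show "inj_on node \<T>" using inj_node assms(1) by (rule inj_on_subset)
  fix v assume "v \<in> node ` N" "preds edges v = {}"
  then obtain X where X: "X \<in> N" "v = node X" "card X < 2"
    using preds_edges_node by (auto split: if_splits)
  then have "card X = 1" using empty_notin finite_member[OF X(1)] by (cases "card X") auto
  then obtain p where "X = {p}" by (rule card_1_singletonE)
  then show "v \<in> (\<lambda>p. node {p}) ` I" using X subset_I by auto
next
  fix T u assume T: "T \<in> \<T>"
  show "(node T, u) \<notin> edges"
  proof
    assume "(node T, u) \<in> edges"
    then obtain X where X: "X \<in> N" "2 \<le> card X" "node T = node (lpart X) \<or> node T = node (rpart X)"
      unfolding edges_def by blast
    then have "T = lpart X \<or> T = rpart X" using inj_onD[OF inj_node] split_parts(1,2) T assms(1) by blast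
    then show False using split_parts(3,4)[OF X(1,2)] maximal[OF X(1) T] by auto
  qed
qed (use finite_N edges_subset acyclic_edges singleton_in preds_edges_node assms(1) in auto)

lemma fanin2_edges: "fanin2 edges"
  unfolding fanin2_def
proof
  fix v
  show "card (preds edges v) \<le> 2"
  proof (cases "v \<in> node ` N")
    case True
    then show ?thesis using preds_edges_node by (auto simp: card_insert_le_m1)
  qed (simp add: preds_edges_outside)
qed

lemma card_gates_edges: "card (gates (node ` N) edges) = card {X \<in> N. 2 \<le> card X}"
proof -
  have "gates (node ` N) edges = node ` {X \<in> N. 2 \<le> card X}"
    unfolding gates_def using preds_edges_node by (auto split: if_splits)
  then show ?thesis using inj_on_subset[OF inj_node] by (simp add: card_image)
qed

lemma preds_gate:
  assumes "v \<in> node ` N" "preds edges v \<noteq> {}"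
  obtains X where "X \<in> N" "2 \<le> card X" "v = node X"
    "preds edges v = {node (lpart X), node (rpart X)}"
proof -
  obtain X where X: "X \<in> N" "v = node X" using assms(1) by blast
  then have "2 \<le> card X" using assms(2) preds_edges_node by (auto split: if_splits)
  then show ?thesis using that X preds_edges_node[OF X(1)] by simp
qed

lemma computes_SUM_edges:
  assumes "\<T> \<subseteq> N"
  shows "computes_SUM I \<T> (node ` N) edges (\<lambda>p. node {p}) node"
  unfolding computes_SUM_def
proof
  fix x :: "pixel \<Rightarrow> nat"
  have "(\<Sum>p\<in>decode v. x p) = (\<Sum>u\<in>preds edges v. \<Sum>p\<in>decode u. x p)"
    if v: "v \<in> node ` N" "preds edges v \<noteq> {}" for v
  proof -
    obtain X where X: "X \<in> N" "2 \<le> card X" "v = node X"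
      and pv: "preds edges v = {node (lpart X), node (rpart X)}"
      using preds_gate[OF v] by blast
    note s = split[OF X(1,2)]
    have "(\<Sum>p\<in>X. x p) = (\<Sum>p\<in>lpart X. x p) + (\<Sum>p\<in>rpart X. x p)"
      using s finite_member split_parts(1,2)[OF X(1,2)] by (metis sum.union_disjoint)
    then show ?thesis using pv X split_parts(1,2,5)[OF X(1,2)] by simp
  qed
  then show "\<exists>val. (\<forall>p\<in>I. val (node {p}) = x p) \<and>
      (\<forall>v\<in>node ` N. preds edges v \<noteq> {} \<longrightarrow> val v = (\<Sum>u\<in>preds edges v. val u)) \<and>
      (\<forall>T\<in>\<T>. val (node T) = (\<Sum>p\<in>T. x p))"
    using singleton_in assms by (intro exI[of _ "\<lambda>v. \<Sum>p\<in>decode v. x p"]) auto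
qed

lemma computes_OR_edges:
  assumes "\<T> \<subseteq> N"
  shows "computes_OR I \<T> (node ` N) edges (\<lambda>p. node {p}) node"
  unfolding computes_OR_def
proof
  fix x :: "pixel \<Rightarrow> bool"
  have "(\<exists>p\<in>decode v. x p) = (\<exists>u\<in>preds edges v. \<exists>p\<in>decode u. x p)"
    if v: "v \<in> node ` N" "preds edges v \<noteq> {}" for v
  proof -
    obtain X where X: "X \<in> N" "2 \<le> card X" "v = node X"
      and pv: "preds edges v = {node (lpart X), node (rpart X)}"
      using preds_gate[OF v] by blast
    then show ?thesis using split[OF X(1,2)] split_parts(1,2)[OF X(1,2)] by auto
  qed
  then show "\<exists>val. (\<forall>p\<in>I. val (node {p}) = x p) \<and>
      (\<forall>v\<in>node ` N. preds edges v \<noteq> {} \<longrightarrow> val v = (\<exists>u\<in>preds edges v. val u)) \<and>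
      (\<forall>T\<in>\<T>. val (node T) = (\<exists>p\<in>T. x p))"
    using singleton_in assms by (intro exI[of _ "\<lambda>v. \<exists>p\<in>decode v. x p"]) (auto simp: subset_iff)
qed

end

theorem decomposition_circuit:
  assumes "finite I" "\<And>X. X \<in> N \<Longrightarrow> X \<subseteq> I" "{} \<notin> N" "\<And>p. p \<in> I \<Longrightarrow> {p} \<in> N"
    and split: "\<And>X. X \<in> N \<Longrightarrow> 2 \<le> card X \<Longrightarrow> \<exists>Y Z. Y \<in> N \<and> Z \<in> N \<and> Y \<inter> Z = {} \<and> X = Y \<union> Z"
    and "\<T> \<subseteq> N" "\<And>X T. X \<in> N \<Longrightarrow> T \<in> \<T> \<Longrightarrow> card X \<le> card T"
  shows "\<exists>V E inp out. is_circuit I \<T> V E inp out \<and> fanin2 E \<and> computes_OR I \<T> V E inp out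
    \<and> computes_SUM I \<T> V E inp out \<and> card (gates V E) = card {X \<in> N. 2 \<le> card X}"
proof -
  obtain lpart rpart where halves: "\<And>X. X \<in> N \<Longrightarrow> 2 \<le> card X \<Longrightarrow>
      lpart X \<in> N \<and> rpart X \<in> N \<and> lpart X \<inter> rpart X = {} \<and> X = lpart X \<union> rpart X"
    using split by metis
  have "finite N" using assms(1,2) by (meson PowI finite_Pow_iff finite_subset subsetI)
  then obtain node :: "pixel set \<Rightarrow> nat" where "inj_on node N"
    using finite_imp_inj_to_nat_seg by blast
  then interpret disjoint_decomposition I N lpart rpart node
    using assms halves by unfold_locales auto
  show ?thesis
    using is_circuit_edges fanin2_edges computes_OR_edges computes_SUM_edges card_gates_edges assms(6,7)
    by blast
qed

section \<open>A circuit for the fast Hough transform\<close>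

text \<open>The sums over blocks are the intermediate values of the fast Hough transform.\<close>

definition fht_blocks :: "nat \<Rightarrow> nat \<Rightarrow> nat \<Rightarrow> nat \<Rightarrow> pixel set set" where
  "fht_blocks w h d k =
     (\<lambda>(b, P). tran w (b * 2 ^ k) 0 P \<inter> img h w) ` ({..<2 ^ (d - k)} \<times> FHT_level w k)"

definition fht_block_family :: "nat \<Rightarrow> nat \<Rightarrow> nat \<Rightarrow> pixel set set" where
  "fht_block_family w h d = (\<Union>k\<le>d. fht_blocks w h d k) - {{}}"

lemma finite_img: "finite (img h w)"
proof -
  have "img h w = {..<h} \<times> {..<w}" unfolding img_def by auto
  then show ?thesis by simp
qed

lemma finite_fht_blocks: "finite (fht_blocks w h d k)"
  unfolding fht_blocks_def using finite_FHT_level by simp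

lemma card_fht_blocks:
  assumes "k \<le> d" "w \<ge> 2"
  shows "card (fht_blocks w h d k) \<le> w * 2 ^ d"
proof -
  have "card (fht_blocks w h d k) \<le> card ({..<(2::nat) ^ (d - k)} \<times> FHT_level w k)"
    unfolding fht_blocks_def by (rule card_image_le) (simp add: finite_FHT_level)
  also have "\<dots> = w * (2 ^ (d - k) * 2 ^ k)" by (simp add: card_cartesian_product card_FHT_level[OF assms(2)])
  also have "2 ^ (d - k) * 2 ^ k = (2::nat) ^ d" using assms(1) by (simp add: power_add[symmetric])
  finally show ?thesis .
qed

lemma card_fht_block:
  assumes "X \<in> fht_blocks w h d k" "w > 0"
  shows "card X \<le> h"
proof -
  obtain b P where P: "P \<in> FHT_level w k" "X = tran w (b * 2 ^ k) 0 P \<inter> img h w"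
    using assms(1) unfolding fht_blocks_def by auto
  have pP: "one_per_row (2 ^ k) w P" using one_per_row_FHT_level[OF assms(2) P(1)] .
  have "inj_on fst (tran w (b * 2 ^ k) 0 P)"
  proof (rule inj_onI)
    fix x y assume "x \<in> tran w (b * 2 ^ k) 0 P" "y \<in> tran w (b * 2 ^ k) 0 P" "fst x = fst y"
    then obtain i j j' where "(i, j) \<in> P" "(i, j') \<in> P" "x = (i + b * 2 ^ k, j)" "y = (i + b * 2 ^ k, j')"
      unfolding tran_0_eq_lift[OF one_per_row_subset[OF pP]] by auto
    then show "x = y" using one_per_row_memD(3)[OF pP] by metis
  qed
  then have "inj_on fst X" using P(2) inj_on_subset by blast
  moreover have "fst ` X \<subseteq> {..<h}" using P(2) unfolding img_def by auto
  ultimately show ?thesis by (metis card_image card_lessThan card_mono finite_lessThan)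
qed

lemma card_fht_block_0:
  assumes "X \<in> fht_blocks w h d 0"
  shows "card X \<le> 1"
proof -
  obtain b j where "X = tran w b 0 {(0, j)} \<inter> img h w" using assms unfolding fht_blocks_def by auto
  then have "X \<subseteq> {(b, j mod w)}" unfolding tran_def by auto
  then show ?thesis using card_mono[of "{(b, j mod w)}" X] by simp
qed

text \<open>The two halves are the translated lower pattern and the translated rotated upper half.\<close>

lemma fht_blocks_Suc_split:
  assumes "w > 0" "Suc k \<le> d" "X \<in> fht_blocks w h d (Suc k)"
  obtains Y Z where "Y \<in> fht_blocks w h d k" "Z \<in> fht_blocks w h d k" "Y \<inter> Z = {}" "X = Y \<union> Z"
proof -
  obtain b P where b: "b < 2 ^ (d - Suc k)" and P: "P \<in> FHT_level w (Suc k)"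
    and X: "X = tran w (b * 2 ^ Suc k) 0 P \<inter> img h w"
    using assms(3) unfolding fht_blocks_def by auto
  obtain Q s where Q: "Q \<in> FHT_level w k" "P = fht_step w k Q s" using P by (rule FHT_level_SucE)
  let ?R = "fht_upper w Q s"
  define Y where "Y = tran w (2 * b * 2 ^ k) 0 Q \<inter> img h w"
  define Z where "Z = tran w ((2 * b + 1) * 2 ^ k) 0 ?R \<inter> img h w"
  have "2 ^ (d - k) = 2 * (2::nat) ^ (d - Suc k)" using assms(2) by (simp add: Suc_diff_Suc[symmetric])
  then have "2 * b < 2 ^ (d - k)" "2 * b + 1 < 2 ^ (d - k)" using b by auto
  then have "Y \<in> fht_blocks w h d k" "Z \<in> fht_blocks w h d k"
    using Q(1) fht_upper_in_FHT_level[OF assms(1) Q(1)] unfolding Y_def Z_def fht_blocks_def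
    by (auto intro: image_eqI[of _ _ "(2 * b, Q)"] image_eqI[of _ _ "(2 * b + 1, ?R)"])
  moreover have "tran w (b * 2 ^ Suc k) 0 P = tran w (2 * b * 2 ^ k) 0 Q \<union> tran w ((2 * b + 1) * 2 ^ k) 0 ?R"
    unfolding Q(2) fht_step_def tran_Un tran_tran by (simp add: algebra_simps)
  then have "X = Y \<union> Z" unfolding X Y_def Z_def by (simp add: Int_Un_distrib2)
  moreover have "Y \<inter> Z = {}"
  proof -
    have "fst p < (2 * b + 1) * 2 ^ k" if "p \<in> Y" for p
      using that one_per_row_fst_less[OF one_per_row_FHT_level[OF assms(1) Q(1)]]
      unfolding Y_def tran_def by auto
    moreover have "(2 * b + 1) * 2 ^ k \<le> fst p" if "p \<in> Z" for p
      using that unfolding Z_def tran_def by auto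
    ultimately show ?thesis by fastforce
  qed
  ultimately show ?thesis using that by blast
qed

lemma fht_block_family_split:
  assumes "w > 0" "k \<le> d" "X \<in> fht_blocks w h d k" "2 \<le> card X"
  shows "\<exists>Y Z. Y \<in> fht_block_family w h d \<and> Z \<in> fht_block_family w h d \<and> Y \<inter> Z = {} \<and> X = Y \<union> Z"
  using assms(2-)
proof (induction k arbitrary: X)
  case 0
  then show ?case using card_fht_block_0 by fastforce
next
  case (Suc k)
  obtain Y Z where YZ: "Y \<in> fht_blocks w h d k" "Z \<in> fht_blocks w h d k" "Y \<inter> Z = {}" "X = Y \<union> Z"
    using fht_blocks_Suc_split[OF assms(1) Suc.prems(1,2)] .
  have k: "k \<le> d" using Suc.prems(1) by simp
  consider "Y = {}" | "Z = {}" | "Y \<noteq> {}" "Z \<noteq> {}" by blast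
  then show ?case
  proof cases
    case 1
    then show ?thesis using Suc.IH[OF k YZ(2)] Suc.prems(3) YZ(4) by simp
  next
    case 2
    then show ?thesis using Suc.IH[OF k YZ(1)] Suc.prems(3) YZ(4) by simp
  next
    case 3
    then show ?thesis using YZ k unfolding fht_block_family_def by blast
  qed
qed

lemma mem_fht_block_family:
  "X \<in> fht_block_family w h d \<longleftrightarrow> X \<noteq> {} \<and> (\<exists>k \<le> d. X \<in> fht_blocks w h d k)"
  unfolding fht_block_family_def by blast

lemma singleton_in_fht_block_family:
  assumes "p \<in> img h w" "h \<le> 2 ^ d"
  shows "{p} \<in> fht_block_family w h d"
proof -
  obtain i j where p: "p = (i, j)" "i < h" "j < w" using assms(1) by (cases p) (auto simp: img_def)
  then have "tran w (i * 2 ^ 0) 0 {(0, j)} \<inter> img h w \<in> fht_blocks w h d 0"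
    using assms(2) unfolding fht_blocks_def by (intro image_eqI[of _ _ "(i, {(0, j)})"]) auto
  moreover have "tran w (i * 2 ^ 0) 0 {(0, j)} \<inter> img h w = {p}"
    using p unfolding tran_def img_def by auto
  ultimately show ?thesis unfolding mem_fht_block_family by auto
qed

lemma FHT_pattern_in_fht_block_family:
  assumes "w > 0" "1 \<le> h" "P \<in> FHT_level w d"
  shows "P \<inter> img h w \<in> fht_block_family w h d"
proof -
  have pP: "one_per_row (2 ^ d) w P" using one_per_row_FHT_level[OF assms(1,3)] .
  have "P \<inter> img h w \<in> fht_blocks w h d d"
    using assms(3) tran_0_0[OF one_per_row_subset[OF pP]] unfolding fht_blocks_def
    by (intro image_eqI[of _ _ "(0, P)"]) auto
  moreover have "(0, col_at P 0) \<in> P \<inter> img h w"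
    using one_per_row_col[OF pP, of 0] assms(2) unfolding img_def by auto
  ultimately show ?thesis unfolding mem_fht_block_family by auto
qed

lemma card_FHT_pattern:
  assumes "w > 0" "h \<le> 2 ^ d" "P \<in> FHT_level w d"
  shows "card (P \<inter> img h w) = h"
proof -
  have pP: "one_per_row (2 ^ d) w P" using one_per_row_FHT_level[OF assms(1,3)] .
  then have "card (rows_below h P) = h" using one_per_row_card one_per_row_rows_below assms(2) by blast
  then show ?thesis using Int_img_eq_rows_below[OF one_per_row_subset[OF pP]] by simp
qed

lemma card_composite_fht_blocks:
  assumes "w \<ge> 2"
  shows "card {X \<in> fht_block_family w h d. 2 \<le> card X} \<le> d * w * 2 ^ d"
proof -
  have "{X \<in> fht_block_family w h d. 2 \<le> card X} \<subseteq> (\<Union>k\<in>{1..d}. fht_blocks w h d k)"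
    using card_fht_block_0 unfolding mem_fht_block_family by (fastforce simp: Suc_le_eq)
  then have "card {X \<in> fht_block_family w h d. 2 \<le> card X} \<le> card (\<Union>k\<in>{1..d}. fht_blocks w h d k)"
    by (rule card_mono[rotated]) (simp add: finite_fht_blocks)
  also have "\<dots> \<le> (\<Sum>k\<in>{1..d}. card (fht_blocks w h d k))" by (rule card_UN_le) simp
  also have "\<dots> \<le> (\<Sum>k\<in>{1..d}. w * 2 ^ d)" by (rule sum_mono) (use card_fht_blocks assms in simp)
  finally show ?thesis by (simp add: mult.assoc)
qed

theorem FHT_circuit:
  assumes w: "w \<ge> 2" and h: "1 \<le> h" "h \<le> 2 ^ d"
  defines "\<T> \<equiv> {T \<inter> img h w | T. T \<in> FHT_level w d}"
  shows "\<exists>V E inp out. is_circuit (img h w) \<T> V E inp out \<and> fanin2 E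
     \<and> computes_OR (img h w) \<T> V E inp out \<and> computes_SUM (img h w) \<T> V E inp out
     \<and> card (gates V E) \<le> d * w * 2 ^ d"
proof -
  have w0: "w > 0" using w by simp
  let ?N = "fht_block_family w h d"
  have "\<exists>V E inp out. is_circuit (img h w) \<T> V E inp out \<and> fanin2 E
    \<and> computes_OR (img h w) \<T> V E inp out \<and> computes_SUM (img h w) \<T> V E inp out
    \<and> card (gates V E) = card {X \<in> ?N. 2 \<le> card X}"
  proof (rule decomposition_circuit[OF finite_img])
    show "X \<subseteq> img h w" if "X \<in> ?N" for X
      using that unfolding mem_fht_block_family fht_blocks_def by auto
    show "{} \<notin> ?N" unfolding mem_fht_block_family by simp
    show "{p} \<in> ?N" if "p \<in> img h w" for p using that h(2) by (rule singleton_in_fht_block_family)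
    show "\<exists>Y Z. Y \<in> ?N \<and> Z \<in> ?N \<and> Y \<inter> Z = {} \<and> X = Y \<union> Z" if X: "X \<in> ?N" "2 \<le> card X" for X
    proof -
      obtain k where "k \<le> d" "X \<in> fht_blocks w h d k" using X(1) unfolding mem_fht_block_family by blast
      then show ?thesis using fht_block_family_split[OF w0 _ _ X(2)] by blast
    qed
    show "\<T> \<subseteq> ?N" unfolding \<T>_def using FHT_pattern_in_fht_block_family[OF w0 h(1)] by blast
    show "card X \<le> card T" if "X \<in> ?N" "T \<in> \<T>" for X T
      using that card_fht_block[OF _ w0] card_FHT_pattern[OF w0 h(2)]
      unfolding mem_fht_block_family \<T>_def by fastforce
  qed
  then obtain V E inp out where "is_circuit (img h w) \<T> V E inp out" "fanin2 E"
    "computes_OR (img h w) \<T> V E inp out" "computes_SUM (img h w) \<T> V E inp out"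
    "card (gates V E) = card {X \<in> ?N. 2 \<le> card X}"
    by blast
  then show ?thesis using card_composite_fht_blocks[OF w, of h d]
    by (intro exI[of _ V] exI[of _ E] exI[of _ inp] exI[of _ out]) simp
qed

section \<open>Bounds for the fast Hough transform\<close>

lemma le_two_power_ceiling_log: "1 \<le> h \<Longrightarrow> h \<le> 2 ^ nat \<lceil>log 2 (real h)\<rceil>"
proof -
  assume h: "1 \<le> h"
  have "real h = 2 powr (log 2 (real h))" using h by simp
  also have "\<dots> \<le> 2 powr real (nat \<lceil>log 2 (real h)\<rceil>)"
    using h by (intro powr_mono) (auto simp: le_of_int_ceiling)
  finally have "real h \<le> 2 ^ nat \<lceil>log 2 (real h)\<rceil>" by (simp add: powr_realpow)
  then show ?thesis by (metis of_nat_le_iff of_nat_numeral of_nat_power)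
qed

lemma two_power_floor_log_le: "1 \<le> h \<Longrightarrow> 2 ^ nat \<lfloor>log 2 (real h)\<rfloor> \<le> h"
proof -
  assume h: "1 \<le> h"
  have "(2::real) ^ nat \<lfloor>log 2 (real h)\<rfloor> = 2 powr real (nat \<lfloor>log 2 (real h)\<rfloor>)"
    by (simp add: powr_realpow)
  also have "\<dots> \<le> 2 powr (log 2 (real h))" using h by (intro powr_mono) auto
  also have "\<dots> = real h" using h by simp
  finally show ?thesis by (metis of_nat_le_iff of_nat_numeral of_nat_power)
qed

lemma FHT_pattern_bottom_rows:
  assumes "w > 0" "2 ^ l \<le> h" "l \<le> d" "Q \<in> FHT_level w l"
  shows "\<exists>P \<in> FHT_level w d. P \<inter> img h w \<inter> img (2 ^ l) w = Q"
proof -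
  obtain P where P: "P \<in> FHT_level w d" "rows_below (2 ^ l) P = Q"
    using FHT_level_extend[OF assms(1,3,4)] by blast
  have "P \<inter> img h w \<inter> img (2 ^ l) w = P \<inter> img (2 ^ l) w" using assms(2) unfolding img_def by auto
  then have "P \<inter> img h w \<inter> img (2 ^ l) w = Q"
    using P(2) Int_img_eq_rows_below[OF one_per_row_subset[OF one_per_row_FHT_level[OF assms(1) P(1)]]]
    by simp
  then show ?thesis using P(1) by blast
qed

theorem FHT_card_edges_lower:
  assumes w: "w \<ge> 2" and h: "2 ^ l \<le> h" "h \<le> 2 ^ d"
    and c: "is_circuit (img h w) \<T> V E inp out"
    and \<T>: "\<T> = {T \<inter> img h w | T. T \<in> FHT_level w d}"
    and reach: "\<And>T p. T \<in> \<T> \<Longrightarrow> p \<in> img h w \<Longrightarrow> p \<in> T \<longleftrightarrow> (inp p, out T) \<in> E\<^sup>*"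
  shows "log 3 8 * (real w * 2 ^ l * real l) \<le> real (card E)"
proof -
  have w0: "w > 0" using w by simp
  have ld: "l \<le> d" using le_trans[OF h] by simp
  let ?B = "img (2 ^ l) w"
  have "\<forall>Q\<in>FHT_level w l. \<exists>T\<in>\<T>. T \<inter> ?B = Q"
  proof
    fix Q assume "Q \<in> FHT_level w l"
    then obtain P where "P \<in> FHT_level w d" "P \<inter> img h w \<inter> ?B = Q"
      using FHT_pattern_bottom_rows[OF w0 h(1) ld] by blast
    then show "\<exists>T\<in>\<T>. T \<inter> ?B = Q" unfolding \<T> by blast
  qed
  then obtain g where g: "\<And>Q. Q \<in> FHT_level w l \<Longrightarrow> g Q \<in> \<T> \<and> g Q \<inter> ?B = Q"
    using bchoice by meson
  define \<S> where "\<S> = g ` FHT_level w l"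
  have inj: "inj_on g (FHT_level w l)" by (metis g inj_onI)
  have card_\<S>: "card \<S> = w * 2 ^ l" unfolding \<S>_def using card_image[OF inj] card_FHT_level[OF w] by simp
  have sharing: "card {T \<in> \<S>. S \<subseteq> T} * card (S \<inter> ?B) \<le> 2 ^ l" if "S \<inter> ?B \<noteq> {}" for S
  proof -
    have "{T \<in> \<S>. S \<subseteq> T} \<subseteq> g ` FHT_supersets w l (S \<inter> ?B)"
      unfolding \<S>_def FHT_supersets_def using g by fastforce
    then have "card {T \<in> \<S>. S \<subseteq> T} \<le> card (g ` FHT_supersets w l (S \<inter> ?B))"
      by (rule card_mono[rotated]) (simp add: finite_FHT_supersets)
    also have "\<dots> \<le> card (FHT_supersets w l (S \<inter> ?B))" by (rule card_image_le[OF finite_FHT_supersets])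
    finally have "card {T \<in> \<S>. S \<subseteq> T} * card (S \<inter> ?B) \<le> card (FHT_supersets w l (S \<inter> ?B)) * card (S \<inter> ?B)"
      by (rule mult_le_mono1)
    also have "\<dots> \<le> 2 ^ l" by (rule card_FHT_supersets[OF w that])
    finally show ?thesis .
  qed
  have "3 * real (card \<S>) * real (2 ^ l) * log 3 (real (2 ^ l)) \<le> real (2 ^ l) * real (card E)"
  proof (rule card_edges_lower_bound[OF c reach finite_img])
    show "T \<subseteq> img h w" if "T \<in> \<T>" for T using that \<T> by auto
    show "\<S> \<subseteq> \<T>" "finite \<S>" unfolding \<S>_def using g finite_FHT_level by auto
    show "card (T \<inter> ?B) = 2 ^ l" if "T \<in> \<S>" for T
    proof -
      obtain Q where "Q \<in> FHT_level w l" "T = g Q" using \<open>T \<in> \<S>\<close> unfolding \<S>_def by blast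
      then show ?thesis using g one_per_row_card[OF one_per_row_FHT_level[OF w0]] by simp
    qed
  qed (use sharing in simp_all)
  moreover have "log 3 8 = 3 * log 3 2" using log_nat_power[of 2 3 3] by simp
  ultimately show ?thesis unfolding card_\<S> by (simp add: log_nat_power field_simps)
qed

theorem FHT_circuit_h_up:
  assumes "w \<ge> 2" "h \<ge> 1"
  shows "\<exists>V E inp out. is_circuit (img h w) (FHT h w) V E inp out \<and> fanin2 E
     \<and> computes_OR (img h w) (FHT h w) V E inp out \<and> computes_SUM (img h w) (FHT h w) V E inp out
     \<and> real (card (gates V E)) \<le> real w * real (h_up h) * log 2 (real (h_up h))"
proof -
  define d where "d = nat \<lceil>log 2 (real h)\<rceil>"
  obtain V E inp out where c: "is_circuit (img h w) (FHT h w) V E inp out" "fanin2 E"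
    "computes_OR (img h w) (FHT h w) V E inp out" "computes_SUM (img h w) (FHT h w) V E inp out"
    "card (gates V E) \<le> d * w * 2 ^ d"
    using FHT_circuit[OF assms le_two_power_ceiling_log[OF assms(2)]] unfolding FHT_def d_def by blast
  have "real (card (gates V E)) \<le> real (d * w * 2 ^ d)" using c(5) by (rule of_nat_mono)
  also have "\<dots> = real w * real (h_up h) * log 2 (real (h_up h))" unfolding h_up_def d_def by simp
  finally show ?thesis using c(1-4) by blast
qed

theorem FHT_lower_bounds:
  assumes w: "w \<ge> 2" and h: "h \<ge> 1" and c: "is_circuit (img h w) (FHT h w) V E inp out"
    and computes: "computes_OR (img h w) (FHT h w) V E inp out \<or> computes_SUM (img h w) (FHT h w) V E inp out"
  defines "lo \<equiv> real w * real (h_low h) * log 2 (real (h_low h))"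
  shows "log 3 8 * lo \<le> real (card E)" and "fanin2 E \<Longrightarrow> log 9 8 * lo \<le> real (card (gates V E))"
proof -
  define l where "l = nat \<lfloor>log 2 (real h)\<rfloor>"
  have "\<And>T. T \<in> FHT h w \<Longrightarrow> T \<subseteq> img h w" unfolding FHT_def by auto
  then have "p \<in> T \<longleftrightarrow> (inp p, out T) \<in> E\<^sup>*" if "T \<in> FHT h w" "p \<in> img h w" for T p
    using computes_reach[OF c finite_img _ computes that] by blast
  moreover have "lo = real w * 2 ^ l * real l" unfolding lo_def h_low_def l_def by simp
  ultimately show edges: "log 3 8 * lo \<le> real (card E)"
    using FHT_card_edges_lower[OF w _ le_two_power_ceiling_log[OF h] c FHT_def] two_power_floor_log_le[OF h]
    unfolding l_def by blast
  assume "fanin2 E"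
  have "log 9 8 = log 3 8 / 2" using log_base_pow[of 3 2 8] by simp
  then have "log 3 8 * lo = 2 * (log 9 8 * lo)" by simp
  then show "log 9 8 * lo \<le> real (card (gates V E))"
    using edges card_edges_le_gates[OF c \<open>fanin2 E\<close>] by linarith
qed

lemma Least_lower_bound:
  fixes P :: "nat \<Rightarrow> bool"
  assumes "P n" "\<And>m. P m \<Longrightarrow> a \<le> real m"
  shows "a \<le> real (Least P)"
  using LeastI[of P n] assms by blast

theorem theorem3:
  fixes h w :: nat
  assumes "w \<ge> 2" and "h \<ge> 1"
  defines "lo \<equiv> real w * real (h_low h) * log 2 (real (h_low h))"
      and "hi \<equiv> real w * real (h_up h) * log 2 (real (h_up h))"
  shows "log 3 8 * lo \<le> real (OR_cx (img h w) (FHT h w)) \<and>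
         real (OR_cx (img h w) (FHT h w)) \<le> 2 * hi \<and>
         log 3 8 * lo \<le> real (SUM_cx (img h w) (FHT h w)) \<and>
         real (SUM_cx (img h w) (FHT h w)) \<le> 2 * hi \<and>
         log 9 8 * lo \<le> real (OR2_cx (img h w) (FHT h w)) \<and>
         real (OR2_cx (img h w) (FHT h w)) \<le> hi \<and>
         log 9 8 * lo \<le> real (SUM2_cx (img h w) (FHT h w)) \<and>
         real (SUM2_cx (img h w) (FHT h w)) \<le> hi"
proof -
  obtain V E inp out where c: "is_circuit (img h w) (FHT h w) V E inp out" "fanin2 E"
    "computes_OR (img h w) (FHT h w) V E inp out" "computes_SUM (img h w) (FHT h w) V E inp out"
    "real (card (gates V E)) \<le> hi"
    using FHT_circuit_h_up[OF assms(1,2)] unfolding hi_def by blast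
  have "real (card E) \<le> 2 * hi" using card_edges_le_gates[OF c(1,2)] c(5) by linarith
  moreover have "log 3 8 * lo \<le> real (OR_cx (img h w) (FHT h w))"
    "log 3 8 * lo \<le> real (SUM_cx (img h w) (FHT h w))"
    "log 9 8 * lo \<le> real (OR2_cx (img h w) (FHT h w))"
    "log 9 8 * lo \<le> real (SUM2_cx (img h w) (FHT h w))"
    unfolding OR_cx_def SUM_cx_def OR2_cx_def SUM2_cx_def lo_def
    by (rule Least_lower_bound; use c FHT_lower_bounds[OF assms(1,2)] in blast)+
  moreover have "real (OR_cx (img h w) (FHT h w)) \<le> real (card E)"
    "real (SUM_cx (img h w) (FHT h w)) \<le> real (card E)"
    "real (OR2_cx (img h w) (FHT h w)) \<le> real (card (gates V E))"
    "real (SUM2_cx (img h w) (FHT h w)) \<le> real (card (gates V E))"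
    unfolding OR_cx_def SUM_cx_def OR2_cx_def SUM2_cx_def
    by (intro of_nat_mono Least_le; use c in blast)+
  ultimately show ?thesis using c(5) by linarith
qed

end
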